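(* Let $F$ be an $h$-flipclass of $\mathfrak S_n$, let $E=E(F)$ and $m=|E|$. Then: (1) the set $F'=\{r_E(\Gamma):\Gamma\in F\}$ is an $h$-flipclass of $\mathfrak S_m$, and $r_E$ is a flips-preserving bijection from $F$ to $F'$ satisfying $r_E(l_i(\Gamma))=l_i(r_E(\Gamma))$ for all $\Gamma\in F$ and $i\in[h]$, where $l_i(\Delta)$ is the $i$-th label of a path $\Delta$; (2) $r_E$ induces an isomorphism of edge-labelled directed graphs from $S_F$ to $S_{F'}$ and from $TS_F$ to $TS_{F'}$, with labels also matched by $r_E$; (3) for any reflection ordering $\preceq$ of the transpositions of $\mathfrak S_n$, the increasing paths (w.r.t. $\preceq$) of $F$, $S_F$, $TS_F$ correspond under $r_E$ to the increasing paths (w.r.t. $\preceq_{r_E}$) of $F'$, $S_{F'}$, $TS_{F'}$, respectively; (4) $r_E$ induces an isomorphism from $F$ to $F'$.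
   Context: $\mathfrak S_n$ is the symmetric group on $[n]$, $T$ its transpositions, $\ell$ the length w.r.t. simple transpositions. The Bruhat graph $B(\mathfrak S_n)$ has an edge $x\xrightarrow{t}y$ iff $yx^{-1}=t\in T$ and $\ell(x)<\ell(y)$; $P_h(u,v)$ is the set of paths $u=x_0\to\cdots\to x_h=v$ of length $h$. Between two fixed vertices there are $0$ or $2$ paths of length $2$, each the flip of the other; the $i$-th flip operator $f_i$ ($i\in[h-1]$) replaces $x_{i-1}\to x_i\to x_{i+1}$ by its flip; an $h$-flipclass of $\mathfrak S_n$ is an orbit of $\langle f_1,\dots,f_{h-1}\rangle$ on some $P_h(u,v)$. For a path $\Gamma$ with labels $t_1,\dots,t_h$, let $M(\Gamma)=\{a\in[n]:t_i(a)\neq a \text{ for some } i\}$; $E(F)$ is $M(\Gamma)$ for any $\Gamma\in F$ (independent of $\Gamma$). For $E\subseteq[n]$ with $|E|=m$, $r_E:E\to[m]$ is the unique order-preserving bijection; for $w\in\mathfrak S_n$, $r_E(w)\in\mathfrak S_m$ is the permutation whose one-line notation is obtained from that of $w$ by deleting entries not in $E$ and applying $r_E$ to the remaining entries; for a path $\Gamma$ all of whose labels are transpositions $(a,b)$ with $a,b\in E$, $r_E(\Gamma)$ is the path in $B(\mathfrak S_m)$ obtained by applying $r_E$ to its vertices and labels ($r_E((a,b))=(r_E(a),r_E(b))$). For a total order $\preceq$ on transpositions of $\mathfrak S_n$, $\preceq_{r_E}$ is the total order on transpositions of $\mathfrak S_m$ with $(a,b)\preceq_{r_E}(c,d)$ iff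 $(r_E^{-1}(a),r_E^{-1}(b))\preceq(r_E^{-1}(c),r_E^{-1}(d))$. For a flipclass $F$: $S_F$ is the edge-labelled subgraph of $B(\mathfrak S_n)$ of vertices and edges lying on paths of $F$; $TS_F$ has vertices $(a,i)$ such that some path $(x_0,\dots,x_h)\in F$ has $x_i=a$, and edges $(a,i)\xrightarrow{t}(b,i+1)$ whenever some path of $F$ contains $x_i=a\xrightarrow{t}b=x_{i+1}$. A reflection ordering is a total order $\preceq$ on $T$ with, for $a<b<c$, either $(a,b)\preceq(a,c)\preceq(b,c)$ or $(b,c)\preceq(a,c)\preceq(a,b)$; a path with labels $t_1,\dots,t_h$ is increasing if $t_1\preceq\cdots\preceq t_h$. Isomorphism of flipclasses: for an $h$-flipclass $F$ of $\mathfrak S_n$ and $F'$ of $\mathfrak S_m$, a pair $(f,g)$ with $f$ a bijection from the permutations occurring on paths of $F$ onto those of $F'$ inducing (vertexwise) a bijection $F\to F'$ commuting with flip operators, $g$ a bijection from the labels of paths of $F$ onto those of $F'$ such that a path with labels $(t_1,\dots,t_h)$ goes to one with labels $(g(t_1),\dots,g(t_h))$, and $g$ order-preserving for the lexicographic orders of transpositions ($(a,b)<(c,d)$, $a<b$, $c<d$, iff $a<c$, or $a=c$ and $b<d$). *)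

theory Defs
  imports Main
begin

text \<open>A permutation of [n] is represented by its one-line notation w(1)...w(n), a list.\<close>
definition perm_n :: "nat \<Rightarrow> nat list \<Rightarrow> bool" where
  "perm_n n w \<longleftrightarrow> distinct w \<and> set w = {1..n}"

definition len :: "nat list \<Rightarrow> nat" where
  "len w = card {(i, j). i < j \<and> j < length w \<and> w ! i > w ! j}"

definition transp_set :: "nat \<Rightarrow> (nat \<times> nat) set" where
  "transp_set n = {(a, b). 1 \<le> a \<and> a < b \<and> b \<le> n}"

definition swapv :: "nat \<times> nat \<Rightarrow> nat \<Rightarrow> nat" where
  "swapv t x = (if x = fst t then snd t else if x = snd t then fst t else x)"

text \<open>Left multiplication t x: acts on the values of the one-line notation.\<close>
definition tmul :: "nat \<times> nat \<Rightarrow> nat list \<Rightarrow> nat list" where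
  "tmul t w = map (swapv t) w"

definition bedge :: "nat \<Rightarrow> nat list \<Rightarrow> nat \<times> nat \<Rightarrow> nat list \<Rightarrow> bool" where
  "bedge n x t y \<longleftrightarrow> perm_n n x \<and> t \<in> transp_set n \<and> y = tmul t x \<and> len x < len y"

text \<open>A path is a pair (vertex list x_0..x_h, label list t_1..t_h); ts ! (i-1) is the i-th label.\<close>
type_synonym bpath = "nat list list \<times> (nat \<times> nat) list"

definition bpaths :: "nat \<Rightarrow> nat \<Rightarrow> nat list \<Rightarrow> nat list \<Rightarrow> bpath set" where
  "bpaths n h u v = {(xs, ts). length ts = h \<and> length xs = Suc h \<and> hd xs = u \<and> last xs = v \<and>
      (\<forall>x\<in>set xs. perm_n n x) \<and> (\<forall>i<h. bedge n (xs ! i) (ts ! i) (xs ! Suc i))}"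

text \<open>The i-th flip operator: replace x_{i-1} -> x_i -> x_{i+1} by the other length-2 path.\<close>
definition flip :: "nat \<Rightarrow> nat \<Rightarrow> bpath \<Rightarrow> bpath" where
  "flip n i p = (THE q. \<exists>y t1 t2. q = ((fst p)[i := y], (snd p)[i - 1 := t1, i := t2]) \<and>
      y \<noteq> fst p ! i \<and> bedge n (fst p ! (i - 1)) t1 y \<and> bedge n y t2 (fst p ! Suc i))"

definition flipstep :: "nat \<Rightarrow> nat \<Rightarrow> nat list \<Rightarrow> nat list \<Rightarrow> (bpath \<times> bpath) set" where
  "flipstep n h u v = {(p, q). p \<in> bpaths n h u v \<and> q \<in> bpaths n h u v \<and>
      (\<exists>i\<in>{1..h - 1}. q = flip n i p \<or> p = flip n i q)}"

text \<open>h-flipclass: an orbit of the group generated by f_1..f_{h-1} on some P_h(u,v).\<close>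
definition is_flipclass :: "nat \<Rightarrow> nat \<Rightarrow> bpath set \<Rightarrow> bool" where
  "is_flipclass n h F \<longleftrightarrow> (\<exists>u v p. p \<in> bpaths n h u v \<and> F = {q. (p, q) \<in> (flipstep n h u v)\<^sup>*})"

definition moved :: "bpath \<Rightarrow> nat set" where
  "moved p = {a. \<exists>i<length (snd p). swapv (snd p ! i) a \<noteq> a}"

definition Eset :: "bpath set \<Rightarrow> nat set" where
  "Eset F = moved (SOME p. p \<in> F)"

definition rk :: "nat set \<Rightarrow> nat \<Rightarrow> nat" where
  "rk E a = Suc (card {x \<in> E. x < a})"

definition rk_inv :: "nat set \<Rightarrow> nat \<Rightarrow> nat" where
  "rk_inv E k = sorted_list_of_set E ! (k - 1)"

definition rperm :: "nat set \<Rightarrow> nat list \<Rightarrow> nat list" where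
  "rperm E w = map (rk E) (filter (\<lambda>x. x \<in> E) w)"

definition rtr :: "nat set \<Rightarrow> nat \<times> nat \<Rightarrow> nat \<times> nat" where
  "rtr E t = (rk E (fst t), rk E (snd t))"

definition rtr_inv :: "nat set \<Rightarrow> nat \<times> nat \<Rightarrow> nat \<times> nat" where
  "rtr_inv E t = (rk_inv E (fst t), rk_inv E (snd t))"

definition rpath :: "nat set \<Rightarrow> bpath \<Rightarrow> bpath" where
  "rpath E p = (map (rperm E) (fst p), map (rtr E) (snd p))"

definition SV :: "bpath set \<Rightarrow> nat list set" where
  "SV F = (\<Union>p\<in>F. set (fst p))"

definition SE :: "bpath set \<Rightarrow> (nat list \<times> (nat \<times> nat) \<times> nat list) set" where
  "SE F = {(fst p ! i, snd p ! i, fst p ! Suc i) | p i. p \<in> F \<and> i < length (snd p)}"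

definition TSV :: "bpath set \<Rightarrow> (nat list \<times> nat) set" where
  "TSV F = {(fst p ! i, i) | p i. p \<in> F \<and> i \<le> length (snd p)}"

definition TSE :: "bpath set \<Rightarrow> ((nat list \<times> nat) \<times> (nat \<times> nat) \<times> (nat list \<times> nat)) set" where
  "TSE F = {((fst p ! i, i), snd p ! i, (fst p ! Suc i, Suc i)) | p i. p \<in> F \<and> i < length (snd p)}"

definition emap :: "('v \<Rightarrow> 'w) \<Rightarrow> ('l \<Rightarrow> 'k) \<Rightarrow> 'v \<times> 'l \<times> 'v \<Rightarrow> 'w \<times> 'k \<times> 'w" where
  "emap f g e = (f (fst e), g (fst (snd e)), f (snd (snd e)))"

definition elabels :: "('v \<times> 'l \<times> 'v) set \<Rightarrow> 'l set" where
  "elabels Es = {t. \<exists>x y. (x, t, y) \<in> Es}"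

definition lg_iso :: "'v set \<Rightarrow> ('v \<times> 'l \<times> 'v) set \<Rightarrow> 'w set \<Rightarrow> ('w \<times> 'k \<times> 'w) set
    \<Rightarrow> ('v \<Rightarrow> 'w) \<Rightarrow> ('l \<Rightarrow> 'k) \<Rightarrow> bool" where
  "lg_iso V Es V' Es' f g \<longleftrightarrow> bij_betw f V V' \<and> bij_betw g (elabels Es) (elabels Es') \<and>
     bij_betw (emap f g) Es Es'"

definition lpaths :: "'v set \<Rightarrow> ('v \<times> 'l \<times> 'v) set \<Rightarrow> ('v list \<times> 'l list) set" where
  "lpaths V Es = {(xs, ts). length xs = Suc (length ts) \<and> set xs \<subseteq> V \<and>
      (\<forall>i<length ts. (xs ! i, ts ! i, xs ! Suc i) \<in> Es)}"

definition pmap :: "('v \<Rightarrow> 'w) \<Rightarrow> ('l \<Rightarrow> 'k) \<Rightarrow> 'v list \<times> 'l list \<Rightarrow> 'w list \<times> 'k list" where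
  "pmap f g p = (map f (fst p), map g (snd p))"

definition reflection_ordering :: "nat \<Rightarrow> ((nat \<times> nat) \<times> (nat \<times> nat)) set \<Rightarrow> bool" where
  "reflection_ordering n R \<longleftrightarrow> linear_order_on (transp_set n) R \<and>
     (\<forall>a b c. 1 \<le> a \<and> a < b \<and> b < c \<and> c \<le> n \<longrightarrow>
        (((a, b), (a, c)) \<in> R \<and> ((a, c), (b, c)) \<in> R) \<or>
        (((b, c), (a, c)) \<in> R \<and> ((a, c), (a, b)) \<in> R))"

definition rorder :: "nat set \<Rightarrow> ((nat \<times> nat) \<times> (nat \<times> nat)) set \<Rightarrow> ((nat \<times> nat) \<times> (nat \<times> nat)) set" where
  "rorder E R = {(s, t). s \<in> transp_set (card E) \<and> t \<in> transp_set (card E) \<and>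
      (rtr_inv E s, rtr_inv E t) \<in> R}"

definition increasing :: "('l \<times> 'l) set \<Rightarrow> 'l list \<Rightarrow> bool" where
  "increasing R ts \<longleftrightarrow> (\<forall>i. Suc i < length ts \<longrightarrow> (ts ! i, ts ! Suc i) \<in> R)"

definition tlex :: "nat \<times> nat \<Rightarrow> nat \<times> nat \<Rightarrow> bool" where
  "tlex s t \<longleftrightarrow> fst s < fst t \<or> (fst s = fst t \<and> snd s < snd t)"

definition fverts :: "bpath set \<Rightarrow> nat list set" where
  "fverts F = (\<Union>p\<in>F. set (fst p))"

definition flabels :: "bpath set \<Rightarrow> (nat \<times> nat) set" where
  "flabels F = (\<Union>p\<in>F. set (snd p))"

definition flip_iso :: "nat \<Rightarrow> nat \<Rightarrow> nat \<Rightarrow> bpath set \<Rightarrow> bpath set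
    \<Rightarrow> (nat list \<Rightarrow> nat list) \<Rightarrow> (nat \<times> nat \<Rightarrow> nat \<times> nat) \<Rightarrow> bool" where
  "flip_iso n m h F F' f g \<longleftrightarrow>
     bij_betw f (fverts F) (fverts F') \<and>
     bij_betw g (flabels F) (flabels F') \<and>
     bij_betw (pmap f g) F F' \<and>
     (\<forall>p\<in>F. \<forall>i\<in>{1..h - 1}. pmap f g (flip n i p) = flip m i (pmap f g p)) \<and>
     (\<forall>s\<in>flabels F. \<forall>t\<in>flabels F. tlex s t \<longrightarrow> tlex (g s) (g t))"

end

theory Submission
  imports Defs
begin

text \<open>All labels of the paths in F move only letters of E, so every vertex of F agrees with the
  common start u outside E and is determined by its reduction. Since x \<rightarrow> t x is a Bruhat edge
  exactly when the letters of t occur in increasing order in x, reduction maps Bruhat edges to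
  Bruhat edges. The crux is that flips commute with reduction: the product t' t of the labels of a
  path of length two is a product of two disjoint transpositions or a 3-cycle, and inspecting its
  few factorizations shows that the other path of length two between the same endpoints uses only
  the letters of t and t' and is unique, so it reduces to the other path between the reduced
  endpoints. Everything else is transport of structure along the injective maps r_E on vertices
  and labels.\<close>

lemma swapv_swapv [simp]: "swapv t (swapv t v) = v"
  unfolding swapv_def by auto

lemma inj_swapv: "inj (swapv t)"
  by (metis injI swapv_swapv)

fun pos :: "'a list \<Rightarrow> 'a \<Rightarrow> nat" where
  "pos [] a = 0"
| "pos (c # xs) a = (if c = a then 0 else Suc (pos xs a))"

lemma pos_less_length: "a \<in> set xs \<Longrightarrow> pos xs a < length xs"
  by (induction xs) auto

lemma nth_pos: "a \<in> set xs \<Longrightarrow> xs ! pos xs a = a"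
  by (induction xs) auto

lemma inj_on_pos: "inj_on (pos xs) (set xs)"
  by (metis inj_onI nth_pos)

lemma pos_map_inj_on: "inj_on f (set xs) \<Longrightarrow> a \<in> set xs \<Longrightarrow> pos (map f xs) (f a) = pos xs a"
  by (induction xs) (auto simp: inj_on_def)

lemma pos_map_involution: "(\<And>v. f (f v) = v) \<Longrightarrow> pos (map f xs) v = pos xs (f v)"
proof (induction xs)
  case (Cons c xs)
  then show ?case
    by (metis list.simps(9) pos.simps(2))
qed simp

lemma pos_tmul: "pos (tmul t xs) v = pos xs (swapv t v)"
  unfolding tmul_def by (rule pos_map_involution) simp

lemma pos_filter_less_iff:
  "P a \<Longrightarrow> P b \<Longrightarrow> a \<in> set xs \<Longrightarrow> b \<in> set xs \<Longrightarrow>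
    pos (filter P xs) a < pos (filter P xs) b \<longleftrightarrow> pos xs a < pos xs b"
  by (induction xs) auto

section \<open>Bruhat edges in terms of positions\<close>

definition inversions :: "nat list \<Rightarrow> (nat \<times> nat) set" where
  "inversions w = {(i, j). i < j \<and> j < length w \<and> w ! i > w ! j}"

lemma len_eq_card_inversions: "len w = card (inversions w)"
  unfolding len_def inversions_def by simp

lemma finite_inversions: "finite (inversions w)"
proof -
  have "inversions w \<subseteq> {..<length w} \<times> {..<length w}"
    unfolding inversions_def by auto
  then show ?thesis
    by (rule finite_subset) auto
qed

lemma nth_swap_entries:
  assumes "p < length x" "q < length x" "i < length x"
  shows "x[p := x ! q, q := x ! p] ! i = x ! swapv (p, q) i"
  using assms by (auto simp: swapv_def nth_list_update)

lemma inj_on_relocate_pairs: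
  fixes \<sigma> :: "nat \<Rightarrow> nat"
  assumes \<sigma>\<sigma>: "\<And>i. \<sigma> (\<sigma> i) = i"
  shows "inj_on (\<lambda>(i, j). if \<sigma> i < \<sigma> j then (\<sigma> i, \<sigma> j) else (i, j)) {(i, j). i < j}"
proof (rule inj_onI, clarify)
  fix i j i' j'
  assume "i < j" "i' < j'" and g: "(if \<sigma> i < \<sigma> j then (\<sigma> i, \<sigma> j) else (i, j)) =
    (if \<sigma> i' < \<sigma> j' then (\<sigma> i', \<sigma> j') else (i', j'))"
  then show "i = i' \<and> j = j'"
  proof (cases "\<sigma> i < \<sigma> j"; cases "\<sigma> i' < \<sigma> j'")
    assume "\<sigma> i < \<sigma> j" "\<sigma> i' < \<sigma> j'"
    then have "\<sigma> i = \<sigma> i'" "\<sigma> j = \<sigma> j'"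
      using g by simp_all
    then show ?thesis
      by (metis \<sigma>\<sigma>)
  next
    assume "\<sigma> i < \<sigma> j" "\<not> \<sigma> i' < \<sigma> j'"
    then have "\<sigma> i = i'" "\<sigma> j = j'"
      using g by simp_all
    then have "\<sigma> i' = i" "\<sigma> j' = j"
      by (metis \<sigma>\<sigma>)+
    then show ?thesis
      using \<open>\<not> \<sigma> i' < \<sigma> j'\<close> \<open>i < j\<close> by simp
  next
    assume "\<not> \<sigma> i < \<sigma> j" "\<sigma> i' < \<sigma> j'"
    then have "\<sigma> i' = i" "\<sigma> j' = j"
      using g by simp_all
    then have "\<sigma> i = i'" "\<sigma> j = j'"
      by (metis \<sigma>\<sigma>)+
    then show ?thesis
      using \<open>\<not> \<sigma> i < \<sigma> j\<close> \<open>i' < j'\<close> by simp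
  next
    assume "\<not> \<sigma> i < \<sigma> j" "\<not> \<sigma> i' < \<sigma> j'"
    then show ?thesis
      using g by simp
  qed
qed

text \<open>Swapping an ascent, adjacent or not, increases the number of inversions: send each inversion
  (i, j) of x to (\<sigma> i, \<sigma> j), \<sigma> the swap of the positions p and q, unless \<sigma> reverses the
  order of i and j. This injection misses the new inversion (p, q).\<close>

lemma len_less_swap_ascent:
  assumes pq: "p < q" "q < length x" and asc: "x ! p < x ! q"
  shows "len x < len (x[p := x ! q, q := x ! p])"
proof -
  define y where "y = x[p := x ! q, q := x ! p]"
  define \<sigma> where "\<sigma> = swapv (p, q)"
  have ly: "length y = length x"
    unfolding y_def by simp
  have y_nth: "y ! i = x ! \<sigma> i" if "i < length x" for i
    using nth_swap_entries[OF _ pq(2) that] pq unfolding y_def \<sigma>_def by simp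
  have \<sigma>_lt: "\<sigma> i < length x" if "i < length x" for i
    using pq that unfolding \<sigma>_def swapv_def by auto
  have \<sigma>\<sigma>: "\<sigma> (\<sigma> i) = i" for i
    unfolding \<sigma>_def by simp
  define g where "g = (\<lambda>(i, j). if \<sigma> i < \<sigma> j then (\<sigma> i, \<sigma> j) else (i, j))"
  have g_maps: "g (i, j) \<in> inversions y - {(p, q)}" if ij: "(i, j) \<in> inversions x" for i j
  proof -
    have i: "i < j" "j < length x" "x ! i > x ! j"
      using ij unfolding inversions_def by auto
    show "g (i, j) \<in> inversions y - {(p, q)}"
    proof (cases "\<sigma> i < \<sigma> j")
      case True
      have "y ! \<sigma> i = x ! i" "y ! \<sigma> j = x ! j"
        using y_nth \<sigma>_lt \<sigma>\<sigma> i by (metis less_trans)+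
      moreover have "(\<sigma> i, \<sigma> j) \<noteq> (p, q)"
        using i(1) pq(1) unfolding \<sigma>_def swapv_def by (auto split: if_splits)
      ultimately show ?thesis
        using True i \<sigma>_lt ly unfolding g_def inversions_def by auto
    next
      case False
      then have "i = p \<and> j < q \<or> j = q \<and> p < i"
        using i pq(1) asc unfolding \<sigma>_def swapv_def by (auto split: if_splits)
      then have "y ! i > y ! j \<and> (i, j) \<noteq> (p, q)"
        using i pq asc y_nth unfolding \<sigma>_def swapv_def by auto
      then show ?thesis
        using False i ly unfolding g_def inversions_def by auto
    qed
  qed
  have "inj_on g (inversions x)"
    unfolding g_def by (rule inj_on_subset[OF inj_on_relocate_pairs[OF \<sigma>\<sigma>]]) (auto simp: inversions_def)
  then have "card (inversions x) = card (g ` inversions x)"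
    by (simp add: card_image)
  also have "\<dots> \<le> card (inversions y - {(p, q)})"
    using g_maps finite_inversions by (intro card_mono) (auto simp: image_subset_iff)
  also have "\<dots> < card (inversions y)"
  proof -
    have "(p, q) \<in> inversions y"
      using pq asc ly y_nth unfolding inversions_def \<sigma>_def swapv_def by auto
    then show ?thesis
      using finite_inversions by (metis card_Diff1_less)
  qed
  finally show ?thesis
    unfolding len_eq_card_inversions y_def .
qed

lemma tmul_eq_swap_entries:
  assumes "distinct x" "p < length x" "q < length x"
  shows "tmul (x ! p, x ! q) x = x[p := x ! q, q := x ! p]"
proof (rule nth_equalityI)
  fix i assume "i < length (tmul (x ! p, x ! q) x)"
  then have "i < length x"
    by (simp add: tmul_def)
  then have "x ! i = x ! p \<longleftrightarrow> i = p" "x ! i = x ! q \<longleftrightarrow> i = q"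
    using assms by (simp_all add: nth_eq_iff_index_eq)
  then show "tmul (x ! p, x ! q) x ! i = x[p := x ! q, q := x ! p] ! i"
    using \<open>i < length x\<close> assms by (auto simp: tmul_def swapv_def nth_list_update)
qed (simp add: tmul_def)

lemma len_less_tmul_iff_pos:
  assumes x: "distinct x" "a \<in> set x" "b \<in> set x" and "a < b"
  shows "len x < len (tmul (a, b) x) \<longleftrightarrow> pos x a < pos x b"
proof -
  have ascent: "len w < len (tmul (a, b) w)" if "distinct w" "a \<in> set w" "b \<in> set w"
    "pos w a < pos w b" for w
    using len_less_swap_ascent[of "pos w a" "pos w b" w] tmul_eq_swap_entries[of w "pos w a" "pos w b"]
      that \<open>a < b\<close> by (simp add: nth_pos pos_less_length)
  have "pos x a \<noteq> pos x b"
    using x \<open>a < b\<close> by (metis nth_pos less_irrefl)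
  moreover have "\<not> len x < len (tmul (a, b) x)" if "pos x b < pos x a"
  proof -
    define y where "y = tmul (a, b) x"
    have "tmul (a, b) y = x"
      unfolding y_def tmul_def by (simp add: comp_def)
    moreover have "distinct y"
      using x(1) inj_on_subset[OF inj_swapv] unfolding y_def tmul_def by (simp add: distinct_map)
    moreover have "a \<in> set y" "b \<in> set y"
      using x(2,3) image_eqI[of a "swapv (a, b)" b] image_eqI[of b "swapv (a, b)" a]
      unfolding y_def tmul_def set_map by (auto simp: swapv_def)
    moreover have "pos y a < pos y b"
      using that \<open>a < b\<close> unfolding y_def pos_tmul by (simp add: swapv_def)
    ultimately show ?thesis
      using ascent[of y] \<open>a < b\<close> unfolding y_def by simp
  qed
  ultimately show ?thesis
    using ascent[OF x] by linarith
qed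

lemma perm_n_distinct: "perm_n n x \<Longrightarrow> distinct x"
  unfolding perm_n_def by auto

lemma set_perm_n: "perm_n n x \<Longrightarrow> set x = {1..n}"
  unfolding perm_n_def by auto

lemma transp_set_iff: "t \<in> transp_set n \<longleftrightarrow> 1 \<le> fst t \<and> fst t < snd t \<and> snd t \<le> n"
  unfolding transp_set_def by (cases t) auto

lemma bedge_iff_pos:
  "bedge n x t y \<longleftrightarrow>
     perm_n n x \<and> t \<in> transp_set n \<and> y = tmul t x \<and> pos x (fst t) < pos x (snd t)"
proof -
  have "len x < len (tmul t x) \<longleftrightarrow> pos x (fst t) < pos x (snd t)"
    if "perm_n n x" "t \<in> transp_set n"
    using len_less_tmul_iff_pos[of x "fst t" "snd t"] that
    by (simp add: perm_n_distinct set_perm_n transp_set_iff)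
  then show ?thesis
    unfolding bedge_def by auto
qed

section \<open>Factorizations of a product of two transpositions\<close>

definition letters :: "nat \<times> nat \<Rightarrow> nat set" where
  "letters t = {fst t, snd t}"

text \<open>With P the position function of a permutation x, this says that x \<rightarrow> s x \<rightarrow> s' s x
  is a path in the Bruhat graph (lemma bedges_iff_climbs).\<close>

definition climbs :: "(nat \<Rightarrow> nat) \<Rightarrow> nat \<times> nat \<Rightarrow> nat \<times> nat \<Rightarrow> bool" where
  "climbs P s s' \<longleftrightarrow> P (fst s) < P (snd s) \<and> P (swapv s (fst s')) < P (swapv s (snd s'))"

lemma swapv_inject:
  assumes "fst s < snd s" "fst t < snd t" "swapv s = swapv t"
  shows "s = t"
proof -
  have "swapv t (fst s) = snd s" "swapv t (snd s) = fst s"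
    using assms(3) unfolding swapv_def by (metis less_irrefl assms(1))+
  then show ?thesis
    using assms(1,2) unfolding swapv_def by (cases s, cases t) (auto split: if_splits)
qed

lemma moved_swapv_comp:
  assumes "a < b" "c < d" "(a, b) \<noteq> (c, d)"
  shows "{v. swapv (c, d) (swapv (a, b) v) \<noteq> v} = {a, b, c, d}"
  using assms by (auto simp: swapv_def)

lemma letters_factorization:
  assumes "a < b" "c < d" "e < f" "g < h" "(a, b) \<noteq> (c, d)"
    and comp: "swapv (g, h) \<circ> swapv (e, f) = swapv (c, d) \<circ> swapv (a, b)"
  shows "{e, f, g, h} = {a, b, c, d}"
proof -
  have moved: "{v. swapv (g, h) (swapv (e, f) v) \<noteq> v} = {a, b, c, d}"
    using moved_swapv_comp[OF assms(1,2,5)] comp by (simp add: comp_def fun_eq_iff)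
  have "(e, f) \<noteq> (g, h)"
  proof
    assume "(e, f) = (g, h)"
    then have "{v. swapv (g, h) (swapv (e, f) v) \<noteq> v} = {}"
      by simp
    then show False
      using moved by simp
  qed
  then show ?thesis
    using moved_swapv_comp[OF assms(3,4)] moved by simp
qed

lemma factorizations_disjoint:
  assumes "a < b" "c < d" "{a, b} \<inter> {c, d} = {}" "e < f" "g < h" "{e, f, g, h} = {a, b, c, d}"
    and comp: "swapv (g, h) \<circ> swapv (e, f) = swapv (c, d) \<circ> swapv (a, b)"
  shows "(e, f) = (a, b) \<and> (g, h) = (c, d) \<or> (e, f) = (c, d) \<and> (g, h) = (a, b)"
proof -
  have ne: "a \<noteq> b" "b \<noteq> a" "c \<noteq> a" "d \<noteq> a" "c \<noteq> b" "d \<noteq> b" "c \<noteq> d" "d \<noteq> c"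
    "a \<noteq> c" "a \<noteq> d" "b \<noteq> c" "b \<noteq> d"
    "\<not> b < a" "\<not> d < c" "\<not> a < a" "\<not> b < b" "\<not> c < c" "\<not> d < d"
    using assms(1-3) by auto
  have letters: "e \<in> {a, b, c, d}" "f \<in> {a, b, c, d}" "g \<in> {a, b, c, d}" "h \<in> {a, b, c, d}"
    using assms(6) by blast+
  have at: "swapv (g, h) (swapv (e, f) a) = swapv (c, d) (swapv (a, b) a)"
    "swapv (g, h) (swapv (e, f) b) = swapv (c, d) (swapv (a, b) b)"
    "swapv (g, h) (swapv (e, f) c) = swapv (c, d) (swapv (a, b) c)"
    "swapv (g, h) (swapv (e, f) d) = swapv (c, d) (swapv (a, b) d)"
    using comp by (simp_all add: fun_eq_iff)
  show ?thesis
    using letters at assms(4,5)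
    by (simp only: insert_iff empty_iff simp_thms) (elim disjE; simp add: ne swapv_def)
qed

text \<open>If the two transpositions share a letter, their product is a 3-cycle on p < q < r, and the
  factorizations of the two 3-cycles on {p, q, r} are listed below.\<close>

definition cycle_up :: "nat \<Rightarrow> nat \<Rightarrow> nat \<Rightarrow> nat \<Rightarrow> nat" where
  "cycle_up p q r v = (if v = p then q else if v = q then r else if v = r then p else v)"

definition cycle_down :: "nat \<Rightarrow> nat \<Rightarrow> nat \<Rightarrow> nat \<Rightarrow> nat" where
  "cycle_down p q r v = (if v = p then r else if v = q then p else if v = r then q else v)"

definition factors_up :: "nat \<Rightarrow> nat \<Rightarrow> nat \<Rightarrow> ((nat \<times> nat) \<times> (nat \<times> nat)) list" where
  "factors_up p q r = [((p, q), (p, r)), ((p, r), (q, r)), ((q, r), (p, q))]"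

definition factors_down :: "nat \<Rightarrow> nat \<Rightarrow> nat \<Rightarrow> ((nat \<times> nat) \<times> (nat \<times> nat)) list" where
  "factors_down p q r = [((p, q), (q, r)), ((p, r), (p, q)), ((q, r), (p, r))]"

lemma ordered_triple_simps:
  fixes p q r :: nat
  assumes "p < q" "q < r"
  shows "p \<noteq> q" "q \<noteq> r" "p \<noteq> r" "q \<noteq> p" "r \<noteq> q" "r \<noteq> p" "\<not> q < p" "\<not> r < q" "\<not> r < p"
    "p < r" "\<not> p < p" "\<not> q < q" "\<not> r < r"
  using assms by auto

lemma factors_up_comp:
  assumes "p < q" "q < r" "(s, s') \<in> set (factors_up p q r)"
  shows "swapv s' \<circ> swapv s = cycle_up p q r"
  using assms(3) unfolding factors_up_def
  by (simp only: set_simps insert_iff empty_iff prod.inject)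
    (elim disjE conjE; simp add: fun_eq_iff ordered_triple_simps[OF assms(1,2)] swapv_def cycle_up_def)

lemma factors_down_comp:
  assumes "p < q" "q < r" "(s, s') \<in> set (factors_down p q r)"
  shows "swapv s' \<circ> swapv s = cycle_down p q r"
  using assms(3) unfolding factors_down_def
  by (simp only: set_simps insert_iff empty_iff prod.inject)
    (elim disjE conjE; simp add: fun_eq_iff ordered_triple_simps[OF assms(1,2)] swapv_def cycle_down_def)

lemma factors_up_transpositions:
  "p < q \<Longrightarrow> q < r \<Longrightarrow> (s, s') \<in> set (factors_up p q r) \<Longrightarrow>
    fst s < snd s \<and> fst s' < snd s' \<and> letters s \<union> letters s' \<subseteq> {p, q, r}"
  unfolding factors_up_def letters_def by auto

lemma factors_down_transpositions:
  "p < q \<Longrightarrow> q < r \<Longrightarrow> (s, s') \<in> set (factors_down p q r) \<Longrightarrow>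
    fst s < snd s \<and> fst s' < snd s' \<and> letters s \<union> letters s' \<subseteq> {p, q, r}"
  unfolding factors_down_def letters_def by auto

lemma factors_up_complete:
  assumes "p < q" "q < r" "e < f" "g < h" "{e, f, g, h} \<subseteq> {p, q, r}"
    and comp: "swapv (g, h) \<circ> swapv (e, f) = cycle_up p q r"
  shows "((e, f), (g, h)) \<in> set (factors_up p q r)"
proof -
  have "swapv (g, h) (swapv (e, f) p) = q" "swapv (g, h) (swapv (e, f) q) = r"
    "swapv (g, h) (swapv (e, f) r) = p"
    using comp ordered_triple_simps[OF assms(1,2)] by (simp_all add: fun_eq_iff cycle_up_def)
  moreover have "e \<in> {p, q, r}" "f \<in> {p, q, r}" "g \<in> {p, q, r}" "h \<in> {p, q, r}"
    using assms(5) by auto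
  ultimately show ?thesis
    using assms(3,4) unfolding factors_up_def
    by (simp only: insert_iff empty_iff simp_thms)
      (elim disjE; simp add: ordered_triple_simps[OF assms(1,2)] swapv_def)
qed

lemma factors_down_complete:
  assumes "p < q" "q < r" "e < f" "g < h" "{e, f, g, h} \<subseteq> {p, q, r}"
    and comp: "swapv (g, h) \<circ> swapv (e, f) = cycle_down p q r"
  shows "((e, f), (g, h)) \<in> set (factors_down p q r)"
proof -
  have "swapv (g, h) (swapv (e, f) p) = r" "swapv (g, h) (swapv (e, f) q) = p"
    "swapv (g, h) (swapv (e, f) r) = q"
    using comp ordered_triple_simps[OF assms(1,2)] by (simp_all add: fun_eq_iff cycle_down_def)
  moreover have "e \<in> {p, q, r}" "f \<in> {p, q, r}" "g \<in> {p, q, r}" "h \<in> {p, q, r}"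
    using assms(5) by auto
  ultimately show ?thesis
    using assms(3,4) unfolding factors_down_def
    by (simp only: insert_iff empty_iff simp_thms)
      (elim disjE; simp add: ordered_triple_simps[OF assms(1,2)] swapv_def)
qed

lemma factors_up_climbs_other:
  assumes "p < q" "q < r" "P p \<noteq> P q" "P q \<noteq> P r" "P p \<noteq> P r"
    "(t, t') \<in> set (factors_up p q r)" "climbs P t t'"
  shows "\<exists>(s, s') \<in> set (factors_up p q r). s \<noteq> t \<and> climbs P s s'"
  using assms(3-) unfolding factors_up_def
  by (simp only: set_simps insert_iff empty_iff prod.inject)
    (elim disjE conjE; simp add: ordered_triple_simps[OF assms(1,2)] swapv_def climbs_def; arith)

lemma factors_down_climbs_other:
  assumes "p < q" "q < r" "P p \<noteq> P q" "P q \<noteq> P r" "P p \<noteq> P r"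
    "(t, t') \<in> set (factors_down p q r)" "climbs P t t'"
  shows "\<exists>(s, s') \<in> set (factors_down p q r). s \<noteq> t \<and> climbs P s s'"
  using assms(3-) unfolding factors_down_def
  by (simp only: set_simps insert_iff empty_iff prod.inject)
    (elim disjE conjE; simp add: ordered_triple_simps[OF assms(1,2)] swapv_def climbs_def; arith)

lemma factors_up_climbs_unique:
  assumes "p < q" "q < r" "P p \<noteq> P q" "P q \<noteq> P r" "P p \<noteq> P r"
    "(t, t') \<in> set (factors_up p q r)" "climbs P t t'"
    "(s1, s1') \<in> set (factors_up p q r)" "s1 \<noteq> t" "climbs P s1 s1'"
    "(s2, s2') \<in> set (factors_up p q r)" "s2 \<noteq> t" "climbs P s2 s2'"
  shows "s1 = s2"
  using assms(3-) unfolding factors_up_def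
  by (simp only: set_simps insert_iff empty_iff prod.inject)
    (elim disjE conjE; simp add: ordered_triple_simps[OF assms(1,2)] swapv_def climbs_def; linarith?)

lemma factors_down_climbs_unique:
  assumes "p < q" "q < r" "P p \<noteq> P q" "P q \<noteq> P r" "P p \<noteq> P r"
    "(t, t') \<in> set (factors_down p q r)" "climbs P t t'"
    "(s1, s1') \<in> set (factors_down p q r)" "s1 \<noteq> t" "climbs P s1 s1'"
    "(s2, s2') \<in> set (factors_down p q r)" "s2 \<noteq> t" "climbs P s2 s2'"
  shows "s1 = s2"
  using assms(3-) unfolding factors_down_def
  by (simp only: set_simps insert_iff empty_iff prod.inject)
    (elim disjE conjE; simp add: ordered_triple_simps[OF assms(1,2)] swapv_def climbs_def; linarith?)

lemma shared_letter_three_cycle: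
  assumes "a < b" "c < d" "(a, b) \<noteq> (c, d)" "{a, b} \<inter> {c, d} \<noteq> {}"
  obtains p q r where "p < q" "q < r" "{a, b, c, d} = {p, q, r}"
    "((a, b), (c, d)) \<in> set (factors_up p q r) \<or> ((a, b), (c, d)) \<in> set (factors_down p q r)"
proof -
  consider "a = c" "b < d" | "a = c" "d < b" | "a = d" | "b = c" | "b = d" "a < c" | "b = d" "c < a"
    using assms by (auto intro: linorder_neqE_nat)
  then show ?thesis
  proof cases
    case 1
    then show ?thesis
      using assms by (intro that[of a b d]) (auto simp: factors_up_def)
  next
    case 2
    then show ?thesis
      using assms by (intro that[of a d b]) (auto simp: factors_down_def)
  next
    case 3
    then show ?thesis
      using assms by (intro that[of c a b]) (auto simp: factors_up_def)
  next
    case 4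
    then show ?thesis
      using assms by (intro that[of a b d]) (auto simp: factors_down_def)
  next
    case 5
    then show ?thesis
      using assms by (intro that[of a c b]) (auto simp: factors_up_def)
  next
    case 6
    then show ?thesis
      using assms by (intro that[of c a b]) (auto simp: factors_down_def)
  qed
qed

lemma inj_on_three_neqs:
  fixes p q r :: nat
  assumes "inj_on P {p, q, r}" "p < q" "q < r"
  shows "P p \<noteq> P q" "P q \<noteq> P r" "P p \<noteq> P r"
  using assms by (metis inj_onD insertCI less_irrefl less_trans)+

text \<open>A product of two distinct transpositions is either a product of two disjoint ones, with
  exactly two factorizations, or a 3-cycle, with exactly three; in both cases exactly one
  factorization other than the given one satisfies the climbing condition.\<close>

lemma other_climbing_factorization:
  assumes "a < b" "c < d" "(a, b) \<noteq> (c, d)" "inj_on P {a, b, c, d}" "climbs P (a, b) (c, d)"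
  obtains e f g h where "e < f" "g < h" "(e, f) \<noteq> (a, b)"
    "swapv (g, h) \<circ> swapv (e, f) = swapv (c, d) \<circ> swapv (a, b)" "climbs P (e, f) (g, h)"
proof (cases "{a, b} \<inter> {c, d} = {}")
  case True
  then have "swapv (a, b) \<circ> swapv (c, d) = swapv (c, d) \<circ> swapv (a, b)" "climbs P (c, d) (a, b)"
    using assms(5) by (auto simp: fun_eq_iff swapv_def climbs_def)
  then show ?thesis
    using that[of c d a b] assms(1-3) by blast
next
  case False
  then obtain p q r where pqr: "p < q" "q < r" "{a, b, c, d} = {p, q, r}"
    and in_factors: "((a, b), (c, d)) \<in> set (factors_up p q r) \<or> ((a, b), (c, d)) \<in> set (factors_down p q r)"
    using shared_letter_three_cycle assms(1-3) by blast
  note P_neq = inj_on_three_neqs[OF assms(4)[unfolded pqr(3)] pqr(1,2)]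
  from in_factors show ?thesis
  proof
    assume ab: "((a, b), (c, d)) \<in> set (factors_up p q r)"
    then obtain s s' where s: "(s, s') \<in> set (factors_up p q r)" "s \<noteq> (a, b)" "climbs P s s'"
      using factors_up_climbs_other[OF pqr(1,2) P_neq ab assms(5)] pqr(3) by auto
    have "fst s < snd s" "fst s' < snd s'"
      using factors_up_transpositions[OF pqr(1,2) s(1)] by simp_all
    moreover have "swapv s' \<circ> swapv s = swapv (c, d) \<circ> swapv (a, b)"
      using factors_up_comp[OF pqr(1,2) s(1)] factors_up_comp[OF pqr(1,2) ab] by simp
    ultimately show ?thesis
      using that[of "fst s" "snd s" "fst s'" "snd s'"] s(2,3) by simp
  next
    assume ab: "((a, b), (c, d)) \<in> set (factors_down p q r)"
    then obtain s s' where s: "(s, s') \<in> set (factors_down p q r)" "s \<noteq> (a, b)" "climbs P s s'"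
      using factors_down_climbs_other[OF pqr(1,2) P_neq ab assms(5)] pqr(3) by auto
    have "fst s < snd s" "fst s' < snd s'"
      using factors_down_transpositions[OF pqr(1,2) s(1)] by simp_all
    moreover have "swapv s' \<circ> swapv s = swapv (c, d) \<circ> swapv (a, b)"
      using factors_down_comp[OF pqr(1,2) s(1)] factors_down_comp[OF pqr(1,2) ab] by simp
    ultimately show ?thesis
      using that[of "fst s" "snd s" "fst s'" "snd s'"] s(2,3) by simp
  qed
qed

lemma other_climbing_factorization_unique:
  assumes "a < b" "c < d" "(a, b) \<noteq> (c, d)" "inj_on P {a, b, c, d}" "climbs P (a, b) (c, d)"
    and "e < f" "g < h" "(e, f) \<noteq> (a, b)" "climbs P (e, f) (g, h)"
      "swapv (g, h) \<circ> swapv (e, f) = swapv (c, d) \<circ> swapv (a, b)"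
    and "e' < f'" "g' < h'" "(e', f') \<noteq> (a, b)" "climbs P (e', f') (g', h')"
      "swapv (g', h') \<circ> swapv (e', f') = swapv (c, d) \<circ> swapv (a, b)"
  shows "(e, f) = (e', f')"
proof -
  have letters: "{e, f, g, h} = {a, b, c, d}" "{e', f', g', h'} = {a, b, c, d}"
    using letters_factorization[OF assms(1,2,6,7,3,10)] letters_factorization[OF assms(1,2,11,12,3,15)]
    by simp_all
  show ?thesis
  proof (cases "{a, b} \<inter> {c, d} = {}")
    case True
    then show ?thesis
      using factorizations_disjoint[OF assms(1,2) True assms(6,7) letters(1) assms(10)]
        factorizations_disjoint[OF assms(1,2) True assms(11,12) letters(2) assms(15)] assms(8,13)
      by auto
  next
    case False
    then obtain p q r where pqr: "p < q" "q < r" "{a, b, c, d} = {p, q, r}"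
      and in_factors: "((a, b), (c, d)) \<in> set (factors_up p q r) \<or> ((a, b), (c, d)) \<in> set (factors_down p q r)"
      using shared_letter_three_cycle assms(1-3) by blast
    note P_neq = inj_on_three_neqs[OF assms(4)[unfolded pqr(3)] pqr(1,2)]
    from in_factors show ?thesis
    proof
      assume ab: "((a, b), (c, d)) \<in> set (factors_up p q r)"
      note cycle = factors_up_comp[OF pqr(1,2) ab]
      have m1: "((e, f), (g, h)) \<in> set (factors_up p q r)"
        by (rule factors_up_complete[OF pqr(1,2) assms(6,7)]) (use letters(1) pqr(3) assms(10) cycle in auto)
      have m2: "((e', f'), (g', h')) \<in> set (factors_up p q r)"
        by (rule factors_up_complete[OF pqr(1,2) assms(11,12)]) (use letters(2) pqr(3) assms(15) cycle in auto)
      show ?thesis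
        using factors_up_climbs_unique[OF pqr(1,2) P_neq ab assms(5) m1 assms(8,9) m2 assms(13,14)] .
    next
      assume ab: "((a, b), (c, d)) \<in> set (factors_down p q r)"
      note cycle = factors_down_comp[OF pqr(1,2) ab]
      have m1: "((e, f), (g, h)) \<in> set (factors_down p q r)"
        by (rule factors_down_complete[OF pqr(1,2) assms(6,7)]) (use letters(1) pqr(3) assms(10) cycle in auto)
      have m2: "((e', f'), (g', h')) \<in> set (factors_down p q r)"
        by (rule factors_down_complete[OF pqr(1,2) assms(11,12)]) (use letters(2) pqr(3) assms(15) cycle in auto)
      show ?thesis
        using factors_down_climbs_unique[OF pqr(1,2) P_neq ab assms(5) m1 assms(8,9) m2 assms(13,14)] .
    qed
  qed
qed

lemma swapv_eq_self_outside:
  "t \<in> transp_set n \<Longrightarrow> v \<notin> {1..n} \<Longrightarrow> swapv t v = v"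
  unfolding transp_set_iff swapv_def by auto

lemma perm_n_tmul:
  assumes "perm_n n x" "t \<in> transp_set n"
  shows "perm_n n (tmul t x)"
proof -
  have "swapv t v \<in> {1..n}" if "v \<in> {1..n}" for v
    using assms(2) that unfolding transp_set_iff swapv_def by auto
  then have "swapv t ` {1..n} = {1..n}"
    by (metis (no_types, lifting) image_subsetI subset_antisym image_eqI subsetI swapv_swapv)
  then show ?thesis
    using assms(1) inj_on_subset[OF inj_swapv] unfolding perm_n_def tmul_def by (simp add: distinct_map)
qed

lemma map_eq_map_iff_fun_eq:
  "set x = A \<Longrightarrow> (\<And>v. v \<notin> A \<Longrightarrow> f v = g v) \<Longrightarrow> map f x = map g x \<longleftrightarrow> f = g"
  by (auto simp: map_eq_conv fun_eq_iff)

lemma tmul_tmul_eq_iff: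
  assumes "perm_n n x" "s \<in> transp_set n" "s' \<in> transp_set n" "t \<in> transp_set n" "t' \<in> transp_set n"
  shows "tmul s' (tmul s x) = tmul t' (tmul t x) \<longleftrightarrow> swapv s' \<circ> swapv s = swapv t' \<circ> swapv t"
  unfolding tmul_def map_map
  by (rule map_eq_map_iff_fun_eq[OF set_perm_n[OF assms(1)]]) (metis assms(2-5) swapv_eq_self_outside comp_apply)

lemma tmul_inject:
  assumes "perm_n n x" "s \<in> transp_set n" "t \<in> transp_set n" "tmul s x = tmul t x"
  shows "s = t"
proof (rule swapv_inject)
  show "swapv s = swapv t"
    using assms map_eq_map_iff_fun_eq[OF set_perm_n[OF assms(1)], of "swapv s" "swapv t"]
    unfolding tmul_def by (simp add: swapv_eq_self_outside)
qed (use assms(2,3) in \<open>simp_all add: transp_set_iff\<close>)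

lemma bedges_iff_climbs:
  assumes "perm_n n x" "s \<in> transp_set n" "s' \<in> transp_set n"
  shows "bedge n x s y \<and> bedge n y s' z \<longleftrightarrow>
    y = tmul s x \<and> z = tmul s' (tmul s x) \<and> climbs (pos x) s s'"
  using assms perm_n_tmul[OF assms(1,2)] unfolding bedge_iff_pos climbs_def by (auto simp: pos_tmul)

lemma bedge_bedge_labels_neq:
  assumes "bedge n x t y" "bedge n y t' z"
  shows "t \<noteq> t'"
proof
  assume "t = t'"
  then have "z = x"
    using assms unfolding bedge_def tmul_def by (simp add: comp_def)
  then show False
    using assms unfolding bedge_def by auto
qed

lemma transp_set_pair_iff: "(a, b) \<in> transp_set n \<longleftrightarrow> 1 \<le> a \<and> a < b \<and> b \<le> n"
  by (simp add: transp_set_iff)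

lemma bruhat_two_path_letters:
  assumes "bedge n x t y" "bedge n y t' z" "bedge n x s y'" "bedge n y' s' z"
  shows "letters s \<union> letters s' = letters t \<union> letters t'"
proof -
  obtain a b c d e f g h where pairs: "t = (a, b)" "t' = (c, d)" "s = (e, f)" "s' = (g, h)"
    by (cases t, cases t', cases s, cases s')
  have "perm_n n x" "t \<in> transp_set n" "t' \<in> transp_set n" "s \<in> transp_set n" "s' \<in> transp_set n"
    using assms unfolding bedge_def by auto
  moreover have "tmul s' (tmul s x) = tmul t' (tmul t x)"
    using assms unfolding bedge_def by auto
  ultimately have "swapv (g, h) \<circ> swapv (e, f) = swapv (c, d) \<circ> swapv (a, b)"
    using tmul_tmul_eq_iff pairs by auto
  then show ?thesis
    using letters_factorization[of a b c d e f g h] bedge_bedge_labels_neq[OF assms(1,2)]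
      \<open>t \<in> transp_set n\<close> \<open>t' \<in> transp_set n\<close> \<open>s \<in> transp_set n\<close> \<open>s' \<in> transp_set n\<close>
    unfolding pairs letters_def by (auto simp: transp_set_pair_iff)
qed

lemma inj_on_pos_perm_n: "perm_n n x \<Longrightarrow> A \<subseteq> {1..n} \<Longrightarrow> inj_on (pos x) A"
  using inj_on_pos inj_on_subset set_perm_n by metis

lemma bruhat_two_path_other:
  assumes "bedge n x t y" "bedge n y t' z"
  obtains y' s s' where "y' \<noteq> y" "bedge n x s y'" "bedge n y' s' z"
proof -
  obtain a b c d where pairs: "t = (a, b)" "t' = (c, d)"
    by (cases t, cases t')
  have x: "perm_n n x" and t: "(a, b) \<in> transp_set n" "(c, d) \<in> transp_set n"
    using assms pairs unfolding bedge_def by auto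
  have yz: "y = tmul (a, b) x" "z = tmul (c, d) (tmul (a, b) x)"
    and "climbs (pos x) (a, b) (c, d)"
    using bedges_iff_climbs[OF x t] assms pairs by auto
  moreover have abcd: "{a, b, c, d} \<subseteq> {1..n}"
    using t by (simp add: transp_set_pair_iff)
  moreover have "(a, b) \<noteq> (c, d)"
    using bedge_bedge_labels_neq[OF assms] pairs by simp
  moreover have "a < b" "c < d"
    using t by (simp_all add: transp_set_pair_iff)
  ultimately obtain e f g h where efgh: "e < f" "g < h" "(e, f) \<noteq> (a, b)"
    "swapv (g, h) \<circ> swapv (e, f) = swapv (c, d) \<circ> swapv (a, b)" "climbs (pos x) (e, f) (g, h)"
    using other_climbing_factorization[of a b c d "pos x"] inj_on_pos_perm_n[OF x abcd] by blast
  have s: "(e, f) \<in> transp_set n" "(g, h) \<in> transp_set n"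
    using letters_factorization[OF \<open>a < b\<close> \<open>c < d\<close> efgh(1,2) \<open>(a, b) \<noteq> (c, d)\<close> efgh(4)] abcd efgh(1,2)
    by (auto simp: transp_set_pair_iff)
  have "z = tmul (g, h) (tmul (e, f) x)"
    using tmul_tmul_eq_iff[OF x s t] efgh(4) yz(2) by simp
  then have "bedge n x (e, f) (tmul (e, f) x)" "bedge n (tmul (e, f) x) (g, h) z"
    using bedges_iff_climbs[OF x s] efgh(5) by auto
  moreover have "tmul (e, f) x \<noteq> y"
    using tmul_inject[OF x s(1) t(1)] efgh(3) yz(1) by blast
  ultimately show ?thesis
    using that by blast
qed

lemma bruhat_two_path_other_unique:
  assumes "bedge n x t y" "bedge n y t' z"
    and "y1 \<noteq> y" "bedge n x s1 y1" "bedge n y1 s1' z"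
    and "y2 \<noteq> y" "bedge n x s2 y2" "bedge n y2 s2' z"
  shows "y1 = y2 \<and> s1 = s2 \<and> s1' = s2'"
proof -
  obtain a b c d where pairs: "t = (a, b)" "t' = (c, d)"
    by (cases t, cases t')
  obtain e1 f1 g1 h1 e2 f2 g2 h2 where pairs': "s1 = (e1, f1)" "s1' = (g1, h1)" "s2 = (e2, f2)" "s2' = (g2, h2)"
    by (cases s1, cases s1', cases s2, cases s2')
  have x: "perm_n n x" and t: "(a, b) \<in> transp_set n" "(c, d) \<in> transp_set n"
    and s: "(e1, f1) \<in> transp_set n" "(g1, h1) \<in> transp_set n" "(e2, f2) \<in> transp_set n" "(g2, h2) \<in> transp_set n"
    using assms pairs pairs' unfolding bedge_def by auto
  have path: "y = tmul (a, b) x" "z = tmul (c, d) (tmul (a, b) x)" "climbs (pos x) (a, b) (c, d)"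
    using bedges_iff_climbs[OF x t] assms(1,2) pairs by auto
  have path1: "y1 = tmul (e1, f1) x" "z = tmul (g1, h1) (tmul (e1, f1) x)" "climbs (pos x) (e1, f1) (g1, h1)"
    using bedges_iff_climbs[OF x s(1,2)] assms(4,5) pairs' by auto
  have path2: "y2 = tmul (e2, f2) x" "z = tmul (g2, h2) (tmul (e2, f2) x)" "climbs (pos x) (e2, f2) (g2, h2)"
    using bedges_iff_climbs[OF x s(3,4)] assms(7,8) pairs' by auto
  have "swapv (g1, h1) \<circ> swapv (e1, f1) = swapv (c, d) \<circ> swapv (a, b)"
    "swapv (g2, h2) \<circ> swapv (e2, f2) = swapv (c, d) \<circ> swapv (a, b)"
    using tmul_tmul_eq_iff[OF x s(1,2) t] tmul_tmul_eq_iff[OF x s(3,4) t] path path1 path2 by auto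
  moreover have "(e1, f1) \<noteq> (a, b)" "(e2, f2) \<noteq> (a, b)"
    using assms(3,6) path(1) path1(1) path2(1) by auto
  moreover have "(a, b) \<noteq> (c, d)"
    using bedge_bedge_labels_neq[OF assms(1,2)] pairs by simp
  moreover have "inj_on (pos x) {a, b, c, d}"
    using t by (intro inj_on_pos_perm_n[OF x]) (simp add: transp_set_pair_iff)
  ultimately have "s1 = s2"
    using other_climbing_factorization_unique[of a b c d "pos x" e1 f1 g1 h1 e2 f2 g2 h2]
      t s path(3) path1(3) path2(3) pairs' by (simp add: transp_set_pair_iff)
  moreover have "y1 = y2"
    using path1(1) path2(1) pairs' \<open>s1 = s2\<close> by simp
  moreover have "s1' = s2'"
    using tmul_inject[OF perm_n_tmul[OF x s(1)] s(2,4)] path1(2) path2(2) pairs' \<open>s1 = s2\<close> by simp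
  ultimately show ?thesis
    by simp
qed

lemma bpathsD:
  assumes "(xs, ts) \<in> bpaths n h u v"
  shows "length ts = h" "length xs = Suc h" "hd xs = u" "last xs = v"
    "\<And>x. x \<in> set xs \<Longrightarrow> perm_n n x" "\<And>k. k < h \<Longrightarrow> bedge n (xs ! k) (ts ! k) (xs ! Suc k)"
  using assms unfolding bpaths_def by auto

lemma flip_eq:
  assumes p: "(xs, ts) \<in> bpaths n h u v" and i: "1 \<le> i" "i < h"
    and y: "y \<noteq> xs ! i" "bedge n (xs ! (i - 1)) s y" "bedge n y s' (xs ! Suc i)"
  shows "flip n i (xs, ts) = (xs[i := y], ts[i - 1 := s, i := s'])"
  unfolding flip_def fst_conv snd_conv
proof (rule the_equality)
  have "bedge n (xs ! (i - 1)) (ts ! (i - 1)) (xs ! i)" "bedge n (xs ! i) (ts ! i) (xs ! Suc i)"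
    using bpathsD(6)[OF p, of "i - 1"] bpathsD(6)[OF p, of i] i by simp_all
  note other_unique = bruhat_two_path_other_unique[OF this]
  fix q
  assume "\<exists>y' t t'. q = (xs[i := y'], ts[i - 1 := t, i := t']) \<and>
    y' \<noteq> xs ! i \<and> bedge n (xs ! (i - 1)) t y' \<and> bedge n y' t' (xs ! Suc i)"
  then show "q = (xs[i := y], ts[i - 1 := s, i := s'])"
    using other_unique[OF _ _ _ y] by blast
qed (use y in blast)

lemma flipE:
  assumes p: "(xs, ts) \<in> bpaths n h u v" and i: "1 \<le> i" "i < h"
  obtains y s s' where "y \<noteq> xs ! i" "bedge n (xs ! (i - 1)) s y" "bedge n y s' (xs ! Suc i)"
    "flip n i (xs, ts) = (xs[i := y], ts[i - 1 := s, i := s'])"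
proof -
  have "bedge n (xs ! (i - 1)) (ts ! (i - 1)) (xs ! i)" "bedge n (xs ! i) (ts ! i) (xs ! Suc i)"
    using bpathsD(6)[OF p, of "i - 1"] bpathsD(6)[OF p, of i] i by simp_all
  then obtain y s s' where "y \<noteq> xs ! i" "bedge n (xs ! (i - 1)) s y" "bedge n y s' (xs ! Suc i)"
    by (rule bruhat_two_path_other)
  then show ?thesis
    using that flip_eq[OF p i] by blast
qed

lemma replace_vertex_in_bpaths:
  assumes p: "(xs, ts) \<in> bpaths n h u v" and i: "1 \<le> i" "i < h"
    and y: "bedge n (xs ! (i - 1)) s y" "bedge n y s' (xs ! Suc i)"
  shows "(xs[i := y], ts[i - 1 := s, i := s']) \<in> bpaths n h u v"
proof -
  note D = bpathsD[OF p]
  have "perm_n n y"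
    using y(1) perm_n_tmul unfolding bedge_def by auto
  then have "\<forall>x\<in>set (xs[i := y]). perm_n n x"
    using D(5) set_update_subset_insert by fastforce
  moreover have "xs \<noteq> []" "xs[i := y] \<noteq> []"
    using D(2) by auto
  then have "hd (xs[i := y]) = u" "last (xs[i := y]) = v"
    using D(2-4) i by (simp_all add: hd_conv_nth last_conv_nth)
  moreover have "bedge n (xs[i := y] ! k) (ts[i - 1 := s, i := s'] ! k) (xs[i := y] ! Suc k)"
    if "k < h" for k
    using that i y D(1,2) D(6)[OF that] by (cases "k = i - 1 \<or> k = i") (auto simp: nth_list_update)
  ultimately show ?thesis
    using D(1,2) unfolding bpaths_def by auto
qed

lemma flip_in_bpaths:
  assumes "p \<in> bpaths n h u v" "1 \<le> i" "i < h"
  shows "flip n i p \<in> bpaths n h u v"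
  using assms by (cases p) (metis flipE replace_vertex_in_bpaths)

lemma flip_flip:
  assumes p: "p \<in> bpaths n h u v" and i: "1 \<le> i" "i < h"
  shows "flip n i (flip n i p) = p"
proof -
  obtain xs ts where p_eq: "p = (xs, ts)"
    by (cases p)
  note D = bpathsD[OF p[unfolded p_eq]]
  obtain y s s' where y: "y \<noteq> xs ! i" "bedge n (xs ! (i - 1)) s y" "bedge n y s' (xs ! Suc i)"
    and flip_p: "flip n i (xs, ts) = (xs[i := y], ts[i - 1 := s, i := s'])"
    using flipE[OF p[unfolded p_eq] i] by blast
  have i': "i - 1 \<noteq> i" "i < length xs" "i < length ts"
    using D(1,2) i by auto
  have "flip n i (xs[i := y], ts[i - 1 := s, i := s']) =
      (xs[i := y, i := xs ! i], ts[i - 1 := s, i := s', i - 1 := ts ! (i - 1), i := ts ! i])"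
    by (rule flip_eq[OF replace_vertex_in_bpaths[OF p[unfolded p_eq] i y(2,3)] i])
      (use y i' D(6)[of "i - 1"] D(6)[of i] i in auto)
  also have "\<dots> = (xs, ts)"
    using i' by (simp add: list_update_swap)
  finally show ?thesis
    using flip_p p_eq by simp
qed

definition path_letters :: "(nat \<times> nat) list \<Rightarrow> nat set" where
  "path_letters ts = (\<Union>t\<in>set ts. letters t)"

lemma path_letters_conv_nth: "path_letters ts = (\<Union>k<length ts. letters (ts ! k))"
  unfolding path_letters_def set_conv_nth by blast

lemma path_letters_update_adjacent:
  assumes "1 \<le> i" "i < length ts" "letters s \<union> letters s' = letters (ts ! (i - 1)) \<union> letters (ts ! i)"
  shows "path_letters (ts[i - 1 := s, i := s']) = path_letters ts"
proof -
  have split: "{..<length ts} = insert (i - 1) (insert i ({..<length ts} - {i - 1, i}))"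
    using assms(1,2) by auto
  have "letters (ts[i - 1 := s, i := s'] ! k) = letters (ts ! k)" if "k \<in> {..<length ts} - {i - 1, i}" for k
    using that by simp
  then have "(\<Union>k\<in>{..<length ts} - {i - 1, i}. letters (ts[i - 1 := s, i := s'] ! k)) =
      (\<Union>k\<in>{..<length ts} - {i - 1, i}. letters (ts ! k))"
    by (rule SUP_cong[OF refl])
  moreover have "i - 1 \<noteq> i" "i - 1 < length ts"
    using assms(1,2) by auto
  ultimately show ?thesis
    unfolding path_letters_conv_nth length_list_update
    by (subst (1 2) split) (use assms(2,3) in \<open>simp add: Un_assoc[symmetric]\<close>)
qed

lemma moved_eq_path_letters:
  assumes "set (snd p) \<subseteq> transp_set n"
  shows "moved p = path_letters (snd p)"
proof -
  have "swapv (snd p ! k) a \<noteq> a \<longleftrightarrow> a \<in> letters (snd p ! k)" if "k < length (snd p)" for k a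
  proof -
    have "snd p ! k \<in> transp_set n"
      using assms nth_mem[OF that] by blast
    then show ?thesis
      unfolding transp_set_iff swapv_def letters_def by auto
  qed
  then show ?thesis
    unfolding moved_def path_letters_conv_nth by auto
qed

lemma path_letters_flip:
  assumes p: "p \<in> bpaths n h u v" and i: "1 \<le> i" "i < h"
  shows "path_letters (snd (flip n i p)) = path_letters (snd p)"
proof -
  obtain xs ts where p_eq: "p = (xs, ts)"
    by (cases p)
  note D = bpathsD[OF p[unfolded p_eq]]
  obtain y s s' where y: "y \<noteq> xs ! i" "bedge n (xs ! (i - 1)) s y" "bedge n y s' (xs ! Suc i)"
    and flip_p: "flip n i (xs, ts) = (xs[i := y], ts[i - 1 := s, i := s'])"
    using flipE[OF p[unfolded p_eq] i] by blast
  have "bedge n (xs ! (i - 1)) (ts ! (i - 1)) (xs ! i)" "bedge n (xs ! i) (ts ! i) (xs ! Suc i)"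
    using D(6)[of "i - 1"] D(6)[of i] i by simp_all
  then have "letters s \<union> letters s' = letters (ts ! (i - 1)) \<union> letters (ts ! i)"
    using bruhat_two_path_letters y(2,3) by blast
  then have "path_letters (ts[i - 1 := s, i := s']) = path_letters ts"
    using path_letters_update_adjacent i D(1) by simp
  then show ?thesis
    using flip_p p_eq by simp
qed

lemma flipstepE:
  assumes "(p, q) \<in> flipstep n h u v"
  obtains i where "p \<in> bpaths n h u v" "1 \<le> i" "i < h" "q = flip n i p"
proof -
  obtain i where p: "p \<in> bpaths n h u v" and q: "q \<in> bpaths n h u v" and i: "1 \<le> i" "i < h"
    and "q = flip n i p \<or> p = flip n i q"
    using assms unfolding flipstep_def by auto
  then have "q = flip n i p"
    using flip_flip[OF q i] by auto
  then show ?thesis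
    using that p i by blast
qed

lemma flip_in_flipstep:
  assumes "p \<in> bpaths n h u v" "1 \<le> i" "i < h"
  shows "(p, flip n i p) \<in> flipstep n h u v"
  using assms flip_in_bpaths[OF assms] unfolding flipstep_def by force

section \<open>The reduction map\<close>

lemma rk_less_rk:
  assumes "finite E" "a \<in> E" "a < b"
  shows "rk E a < rk E b"
proof -
  have "{x \<in> E. x < a} \<subset> {x \<in> E. x < b}"
    using assms by auto
  then show ?thesis
    using assms(1) unfolding rk_def by (simp add: psubset_card_mono)
qed

lemma rk_less_rk_iff: "finite E \<Longrightarrow> a \<in> E \<Longrightarrow> b \<in> E \<Longrightarrow> rk E a < rk E b \<longleftrightarrow> a < b"
  by (metis rk_less_rk less_asym linorder_neqE_nat)

lemma inj_on_rk: "finite E \<Longrightarrow> inj_on (rk E) E"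
  by (metis inj_onI rk_less_rk_iff less_irrefl linorder_neqE_nat)

lemma rk_bounds:
  assumes "finite E" "a \<in> E"
  shows "1 \<le> rk E a" "rk E a \<le> card E"
proof -
  have "card {x \<in> E. x < a} < card E"
    using assms by (intro psubset_card_mono) auto
  then show "1 \<le> rk E a" "rk E a \<le> card E"
    unfolding rk_def by simp_all
qed

lemma rk_image: "finite E \<Longrightarrow> rk E ` E = {1..card E}"
  using rk_bounds card_image[OF inj_on_rk]
  by (intro card_subset_eq) (auto simp: image_subset_iff)

lemma rk_inv_rk:
  assumes "finite E" "a \<in> E"
  shows "rk_inv E (rk E a) = a"
proof -
  define s where "s = sorted_list_of_set E"
  have s: "sorted_wrt (<) s" "set s = E" "distinct s"
    using assms(1) unfolding s_def by auto
  obtain k where k: "k < length s" "s ! k = a"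
    using assms(2) s(2) by (metis in_set_conv_nth)
  have "{x \<in> E. x < a} = (!) s ` {..<k}"
  proof (intro set_eqI iffI)
    fix x assume "x \<in> {x \<in> E. x < a}"
    then obtain j where "j < length s" "s ! j = x" "x < a"
      using s(2) by (auto simp: in_set_conv_nth)
    moreover have "\<not> k < j" if "j < length s" "s ! j < s ! k" for j
      using that s(1) sorted_wrt_nth_less by fastforce
    ultimately show "x \<in> (!) s ` {..<k}"
      using k by (metis imageI lessThan_iff linorder_neqE_nat less_irrefl)
  next
    fix x assume "x \<in> (!) s ` {..<k}"
    then show "x \<in> {x \<in> E. x < a}"
      using k s(1,2) by (auto simp: sorted_wrt_nth_less)
  qed
  moreover have "inj_on ((!) s) {..<k}"
    using s(3) k(1) by (simp add: inj_on_def nth_eq_iff_index_eq)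
  ultimately have "card {x \<in> E. x < a} = k"
    by (simp add: card_image)
  then show ?thesis
    unfolding rk_inv_def rk_def s_def[symmetric] using k by simp
qed

lemma rtr_inv_rtr: "finite E \<Longrightarrow> letters t \<subseteq> E \<Longrightarrow> rtr_inv E (rtr E t) = t"
  unfolding rtr_inv_def rtr_def letters_def by (simp add: rk_inv_rk)

lemma inj_on_rtr: "finite E \<Longrightarrow> inj_on (rtr E) {t. letters t \<subseteq> E}"
  by (metis (mono_tags, lifting) inj_onI mem_Collect_eq rtr_inv_rtr)

lemma rtr_in_transp_set:
  assumes "finite E" "t \<in> transp_set n" "letters t \<subseteq> E"
  shows "rtr E t \<in> transp_set (card E)"
  using assms rk_bounds[OF assms(1)] rk_less_rk[OF assms(1)]
  unfolding transp_set_iff rtr_def letters_def by auto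

lemma rorder_rtr_iff:
  assumes "finite E" "s \<in> transp_set n" "t \<in> transp_set n" "letters s \<subseteq> E" "letters t \<subseteq> E"
  shows "(rtr E s, rtr E t) \<in> rorder E R \<longleftrightarrow> (s, t) \<in> R"
  using assms rtr_in_transp_set rtr_inv_rtr unfolding rorder_def by auto

lemma tlex_rtr:
  assumes "finite E" "letters s \<subseteq> E" "letters t \<subseteq> E" "tlex s t"
  shows "tlex (rtr E s) (rtr E t)"
  using assms rk_less_rk_iff[OF assms(1)] unfolding tlex_def rtr_def letters_def by auto

lemma perm_n_rperm:
  assumes "perm_n n x" "E \<subseteq> {1..n}"
  shows "perm_n (card E) (rperm E x)"
proof -
  have "finite E"
    using assms(2) finite_subset by blast
  moreover have "set (filter (\<lambda>v. v \<in> E) x) = E" "distinct (filter (\<lambda>v. v \<in> E) x)"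
    using assms set_perm_n[OF assms(1)] perm_n_distinct[OF assms(1)] by auto
  ultimately show ?thesis
    unfolding rperm_def perm_n_def using inj_on_rk rk_image by (simp add: distinct_map)
qed

lemma rk_swapv:
  assumes "finite E" "letters t \<subseteq> E" "v \<in> E"
  shows "rk E (swapv t v) = swapv (rtr E t) (rk E v)"
  using assms inj_on_rk[OF assms(1)] unfolding swapv_def rtr_def letters_def
  by (auto dest: inj_onD)

lemma rperm_tmul:
  assumes "finite E" "letters t \<subseteq> E"
  shows "rperm E (tmul t x) = tmul (rtr E t) (rperm E x)"
proof -
  have "swapv t v \<in> E \<longleftrightarrow> v \<in> E" for v
    using assms(2) unfolding swapv_def letters_def by auto
  then have "filter (\<lambda>v. v \<in> E) (map (swapv t) x) = map (swapv t) (filter (\<lambda>v. v \<in> E) x)"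
    by (induction x) auto
  then show ?thesis
    unfolding rperm_def tmul_def using rk_swapv[OF assms] by simp
qed

lemma pos_rperm_less_iff:
  assumes "finite E" "a \<in> set x" "a \<in> E" "b \<in> set x" "b \<in> E"
  shows "pos (rperm E x) (rk E a) < pos (rperm E x) (rk E b) \<longleftrightarrow> pos x a < pos x b"
proof -
  have inj: "inj_on (rk E) (set (filter (\<lambda>v. v \<in> E) x))"
    using inj_on_rk[OF assms(1)] by (rule inj_on_subset) auto
  have "pos (rperm E x) (rk E c) = pos (filter (\<lambda>v. v \<in> E) x) c" if "c \<in> set x" "c \<in> E" for c
    unfolding rperm_def using pos_map_inj_on[OF inj] that by simp
  then show ?thesis
    using assms pos_filter_less_iff[of "\<lambda>v. v \<in> E" a b x] by simp
qed

lemma bedge_rperm: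
  assumes "bedge n x t y" "letters t \<subseteq> E" "E \<subseteq> {1..n}"
  shows "bedge (card E) (rperm E x) (rtr E t) (rperm E y)"
proof -
  have E: "finite E"
    using assms(3) finite_subset by blast
  have x: "perm_n n x" and t: "t \<in> transp_set n" and y: "y = tmul t x"
    and climb: "pos x (fst t) < pos x (snd t)"
    using assms(1) unfolding bedge_iff_pos by auto
  have "fst t \<in> set x" "fst t \<in> E" "snd t \<in> set x" "snd t \<in> E"
    using assms(2,3) set_perm_n[OF x] unfolding letters_def by auto
  then have "pos (rperm E x) (rk E (fst t)) < pos (rperm E x) (rk E (snd t))"
    using pos_rperm_less_iff[OF E] climb by blast
  then show ?thesis
    using perm_n_rperm[OF x assms(3)] rtr_in_transp_set[OF E t assms(2)] rperm_tmul[OF E assms(2)] y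
    unfolding bedge_iff_pos by (simp add: rtr_def)
qed

text \<open>The vertices of a path whose labels only move letters of E agree with its start off E,
  so they are determined by their reductions.\<close>

definition agrees_off :: "nat set \<Rightarrow> nat list \<Rightarrow> nat list \<Rightarrow> bool" where
  "agrees_off E u x \<longleftrightarrow> list_all2 (\<lambda>a b. if a \<in> E then b \<in> E else b = a) u x"

lemma agrees_off_refl: "agrees_off E u u"
  unfolding agrees_off_def by (simp add: list_all2_refl)

lemma agrees_off_tmul:
  assumes "agrees_off E u x" "letters t \<subseteq> E"
  shows "agrees_off E u (tmul t x)"
proof -
  have "swapv t b \<in> E \<longleftrightarrow> b \<in> E" "b \<notin> E \<Longrightarrow> swapv t b = b" for b
    using assms(2) unfolding swapv_def letters_def by auto
  then show ?thesis
    using assms(1) unfolding agrees_off_def tmul_def list_all2_map2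
    by (auto elim!: list_all2_mono split: if_splits)
qed

lemma agrees_off_filter_inj:
  "agrees_off E u x \<Longrightarrow> agrees_off E u x' \<Longrightarrow>
    filter (\<lambda>v. v \<in> E) x = filter (\<lambda>v. v \<in> E) x' \<Longrightarrow> x = x'"
proof (induction u arbitrary: x x')
  case (Cons c u)
  then obtain d xs d' xs' where "x = d # xs" "x' = d' # xs'"
    "agrees_off E u xs" "agrees_off E u xs'"
    unfolding agrees_off_def by (auto simp: list_all2_Cons1)
  with Cons show ?case
    unfolding agrees_off_def by (auto split: if_splits)
qed (simp add: agrees_off_def)

lemma rperm_inj_agrees_off:
  assumes "finite E" "agrees_off E u x" "agrees_off E u x'" "rperm E x = rperm E x'"
  shows "x = x'"
proof -
  have "inj_on (rk E) (set (filter (\<lambda>v. v \<in> E) x) \<union> set (filter (\<lambda>v. v \<in> E) x'))"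
    using inj_on_rk[OF assms(1)] by (rule inj_on_subset) auto
  then have "filter (\<lambda>v. v \<in> E) x = filter (\<lambda>v. v \<in> E) x'"
    using assms(4) inj_on_map_eq_map unfolding rperm_def by blast
  then show ?thesis
    using agrees_off_filter_inj assms(2,3) by blast
qed

lemma elabels_image: "elabels (emap f g ` Es) = g ` elabels Es"
  unfolding elabels_def emap_def by force

lemma lg_iso_image:
  assumes f: "inj_on f V" and g: "inj_on g (elabels Es)"
    and ends: "\<And>x t y. (x, t, y) \<in> Es \<Longrightarrow> x \<in> V \<and> y \<in> V"
  shows "lg_iso V Es (f ` V) (emap f g ` Es) f g"
proof -
  have "inj_on (emap f g) Es"
  proof (rule inj_onI)
    fix e e' assume "e \<in> Es" "e' \<in> Es" and eq: "emap f g e = emap f g e'"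
    moreover obtain x t y x' t' y' where "e = (x, t, y)" "e' = (x', t', y')"
      by (metis prod_cases3)
    ultimately have "(x, t, y) \<in> Es" "(x', t', y') \<in> Es" "f x = f x'" "g t = g t'" "f y = f y'"
      unfolding emap_def by simp_all
    moreover from this(1,2) have "t \<in> elabels Es" "t' \<in> elabels Es"
      unfolding elabels_def by blast+
    ultimately show "e = e'"
      using ends f g \<open>e = (x, t, y)\<close> \<open>e' = (x', t', y')\<close> by (metis inj_onD)
  qed
  then show ?thesis
    unfolding lg_iso_def elabels_image using f g by (simp add: inj_on_imp_bij_betw)
qed

lemma pmap_in_lpaths:
  assumes "p \<in> lpaths V Es" "f ` V \<subseteq> V'" "\<And>e. e \<in> Es \<Longrightarrow> emap f g e \<in> Es'"
  shows "pmap f g p \<in> lpaths V' Es'"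
proof -
  have "emap f g (fst p ! i, snd p ! i, fst p ! Suc i) \<in> Es'" if "i < length (snd p)" for i
    using assms(1,3) that unfolding lpaths_def by auto
  moreover have "set (fst p) \<subseteq> V"
    using assms(1) unfolding lpaths_def by auto
  then have "set (map f (fst p)) \<subseteq> V'"
    using assms(2) by auto
  ultimately show ?thesis
    using assms(1) unfolding lpaths_def pmap_def emap_def by auto
qed

lemma labels_lpaths:
  assumes "p \<in> lpaths V Es"
  shows "set (snd p) \<subseteq> elabels Es"
proof
  fix t assume "t \<in> set (snd p)"
  then obtain i where "i < length (snd p)" "t = snd p ! i"
    by (metis in_set_conv_nth)
  then have "(fst p ! i, t, fst p ! Suc i) \<in> Es"
    using assms unfolding lpaths_def by auto
  then show "t \<in> elabels Es"
    unfolding elabels_def by blast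
qed

lemma bij_betw_pmap_lpaths:
  assumes f: "inj_on f V" and g: "inj_on g (elabels Es)"
    and ends: "\<And>x t y. (x, t, y) \<in> Es \<Longrightarrow> x \<in> V \<and> y \<in> V"
  shows "bij_betw (pmap f g) (lpaths V Es) (lpaths (f ` V) (emap f g ` Es))"
proof (rule bij_betw_byWitness[where f' = "pmap (inv_into V f) (inv_into (elabels Es) g)"])
  show "\<forall>p \<in> lpaths V Es. pmap (inv_into V f) (inv_into (elabels Es) g) (pmap f g p) = p"
  proof
    fix p assume p: "p \<in> lpaths V Es"
    then have "set (fst p) \<subseteq> V"
      unfolding lpaths_def by auto
    then have "map (inv_into V f \<circ> f) (fst p) = fst p"
      using inv_into_f_f[OF f] by (intro map_idI) auto
    moreover have "map (inv_into (elabels Es) g \<circ> g) (snd p) = snd p"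
      using inv_into_f_f[OF g] labels_lpaths[OF p] by (intro map_idI) auto
    ultimately show "pmap (inv_into V f) (inv_into (elabels Es) g) (pmap f g p) = p"
      unfolding pmap_def by simp
  qed
  show "\<forall>p \<in> lpaths (f ` V) (emap f g ` Es). pmap f g (pmap (inv_into V f) (inv_into (elabels Es) g) p) = p"
  proof
    fix p assume p: "p \<in> lpaths (f ` V) (emap f g ` Es)"
    then have "set (fst p) \<subseteq> f ` V"
      unfolding lpaths_def by auto
    then have "map (f \<circ> inv_into V f) (fst p) = fst p"
      using f_inv_into_f[of _ f V] by (intro map_idI) auto
    moreover have "map (g \<circ> inv_into (elabels Es) g) (snd p) = snd p"
      using labels_lpaths[OF p] f_inv_into_f[of _ g "elabels Es"] unfolding elabels_image
      by (intro map_idI) auto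
    ultimately show "pmap f g (pmap (inv_into V f) (inv_into (elabels Es) g) p) = p"
      unfolding pmap_def by simp
  qed
  show "pmap f g ` lpaths V Es \<subseteq> lpaths (f ` V) (emap f g ` Es)"
    by (rule image_subsetI, rule pmap_in_lpaths) auto
  have "emap (inv_into V f) (inv_into (elabels Es) g) e' \<in> Es" if e': "e' \<in> emap f g ` Es" for e'
  proof -
    obtain e where "e \<in> Es" "e' = emap f g e"
      using e' by blast
    moreover obtain x t y where "e = (x, t, y)"
      by (rule prod_cases3)
    ultimately have e: "(x, t, y) \<in> Es" "e' = emap f g (x, t, y)"
      by simp_all
    then have "x \<in> V" "y \<in> V" "t \<in> elabels Es"
      using ends unfolding elabels_def by blast+
    then show ?thesis
      using e inv_into_f_f[OF f] inv_into_f_f[OF g] unfolding emap_def by simp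
  qed
  then show "pmap (inv_into V f) (inv_into (elabels Es) g) ` lpaths (f ` V) (emap f g ` Es) \<subseteq> lpaths V Es"
    by (intro image_subsetI pmap_in_lpaths) (auto intro: inv_into_into)
qed

lemma increasing_map_iff:
  assumes "\<And>s t. s \<in> A \<Longrightarrow> t \<in> A \<Longrightarrow> (g s, g t) \<in> R' \<longleftrightarrow> (s, t) \<in> R" "set ts \<subseteq> A"
  shows "increasing R' (map g ts) \<longleftrightarrow> increasing R ts"
  using assms unfolding increasing_def by (auto simp: subset_iff)

lemma bij_betw_pmap_increasing_lpaths:
  assumes f: "inj_on f V" and g: "inj_on g (elabels Es)"
    and ends: "\<And>x t y. (x, t, y) \<in> Es \<Longrightarrow> x \<in> V \<and> y \<in> V"
    and R: "\<And>s t. s \<in> elabels Es \<Longrightarrow> t \<in> elabels Es \<Longrightarrow> (g s, g t) \<in> R' \<longleftrightarrow> (s, t) \<in> R"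
  shows "bij_betw (pmap f g) {p \<in> lpaths V Es. increasing R (snd p)}
    {p \<in> lpaths (f ` V) (emap f g ` Es). increasing R' (snd p)}"
proof (rule bij_betw_Collect[OF bij_betw_pmap_lpaths[OF f g ends]])
  fix p assume "p \<in> lpaths V Es"
  then show "increasing R' (snd (pmap f g p)) \<longleftrightarrow> increasing R (snd p)"
    using increasing_map_iff[OF R labels_lpaths] unfolding pmap_def by simp
qed

lemma inj_on_pmap:
  assumes "inj_on f (SV F)" "inj_on g (flabels F)"
  shows "inj_on (pmap f g) F"
proof (rule inj_onI)
  fix p q assume "p \<in> F" "q \<in> F" and eq: "pmap f g p = pmap f g q"
  then have "inj_on f (set (fst p) \<union> set (fst q))" "inj_on g (set (snd p) \<union> set (snd q))"
    using assms unfolding SV_def flabels_def by (auto intro: inj_on_subset)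
  then show "p = q"
    using eq inj_on_map_eq_map unfolding pmap_def by (metis prod.collapse prod.inject)
qed

lemma SV_pmap_image: "SV (pmap f g ` F) = f ` SV F"
  unfolding SV_def pmap_def by auto

lemma flabels_pmap_image: "flabels (pmap f g ` F) = g ` flabels F"
  unfolding flabels_def pmap_def by auto

lemma SE_pmap_image:
  assumes "\<forall>p\<in>F. length (fst p) = Suc (length (snd p))"
  shows "SE (pmap f g ` F) = emap f g ` SE F"
proof (intro set_eqI iffI)
  fix e assume "e \<in> SE (pmap f g ` F)"
  then obtain p i where p: "p \<in> F" "i < length (snd p)"
    and "e = (fst (pmap f g p) ! i, snd (pmap f g p) ! i, fst (pmap f g p) ! Suc i)"
    unfolding SE_def by (auto simp: pmap_def)
  then have "e = emap f g ((fst p ! i, snd p ! i, fst p ! Suc i))"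
    using assms unfolding pmap_def emap_def by simp
  moreover have "(fst p ! i, snd p ! i, fst p ! Suc i) \<in> SE F"
    using p unfolding SE_def by blast
  ultimately show "e \<in> emap f g ` SE F"
    by blast
next
  fix e assume "e \<in> emap f g ` SE F"
  then obtain p i where p: "p \<in> F" "i < length (snd p)"
    and "e = emap f g ((fst p ! i, snd p ! i, fst p ! Suc i))"
    unfolding SE_def by blast
  then have "e = (fst (pmap f g p) ! i, snd (pmap f g p) ! i, fst (pmap f g p) ! Suc i)"
    using assms unfolding pmap_def emap_def by simp
  moreover have "pmap f g p \<in> pmap f g ` F" "i < length (snd (pmap f g p))"
    using p unfolding pmap_def by auto
  ultimately show "e \<in> SE (pmap f g ` F)"
    unfolding SE_def by blast
qed

lemma TSV_pmap_image:
  assumes "\<forall>p\<in>F. length (fst p) = Suc (length (snd p))"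
  shows "TSV (pmap f g ` F) = (\<lambda>(a, i). (f a, i)) ` TSV F"
proof (intro set_eqI iffI)
  fix e assume "e \<in> TSV (pmap f g ` F)"
  then obtain p i where p: "p \<in> F" "i \<le> length (snd p)"
    and "e = (fst (pmap f g p) ! i, i)"
    unfolding TSV_def by (auto simp: pmap_def)
  then have "e = (\<lambda>(a, i). (f a, i)) ((fst p ! i, i))"
    using assms unfolding pmap_def emap_def by simp
  moreover have "(fst p ! i, i) \<in> TSV F"
    using p unfolding TSV_def by blast
  ultimately show "e \<in> (\<lambda>(a, i). (f a, i)) ` TSV F"
    by blast
next
  fix e assume "e \<in> (\<lambda>(a, i). (f a, i)) ` TSV F"
  then obtain p i where p: "p \<in> F" "i \<le> length (snd p)"
    and "e = (\<lambda>(a, i). (f a, i)) ((fst p ! i, i))"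
    unfolding TSV_def by blast
  then have "e = (fst (pmap f g p) ! i, i)"
    using assms unfolding pmap_def emap_def by simp
  moreover have "pmap f g p \<in> pmap f g ` F" "i \<le> length (snd (pmap f g p))"
    using p unfolding pmap_def by auto
  ultimately show "e \<in> TSV (pmap f g ` F)"
    unfolding TSV_def by blast
qed

lemma TSE_pmap_image:
  assumes "\<forall>p\<in>F. length (fst p) = Suc (length (snd p))"
  shows "TSE (pmap f g ` F) = emap (\<lambda>(a, i). (f a, i)) g ` TSE F"
proof (intro set_eqI iffI)
  fix e assume "e \<in> TSE (pmap f g ` F)"
  then obtain p i where p: "p \<in> F" "i < length (snd p)"
    and "e = ((fst (pmap f g p) ! i, i), snd (pmap f g p) ! i, (fst (pmap f g p) ! Suc i, Suc i))"
    unfolding TSE_def by (auto simp: pmap_def)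
  then have "e = emap (\<lambda>(a, i). (f a, i)) g (((fst p ! i, i), snd p ! i, (fst p ! Suc i, Suc i)))"
    using assms unfolding pmap_def emap_def by simp
  moreover have "((fst p ! i, i), snd p ! i, (fst p ! Suc i, Suc i)) \<in> TSE F"
    using p unfolding TSE_def by blast
  ultimately show "e \<in> emap (\<lambda>(a, i). (f a, i)) g ` TSE F"
    by blast
next
  fix e assume "e \<in> emap (\<lambda>(a, i). (f a, i)) g ` TSE F"
  then obtain p i where p: "p \<in> F" "i < length (snd p)"
    and "e = emap (\<lambda>(a, i). (f a, i)) g (((fst p ! i, i), snd p ! i, (fst p ! Suc i, Suc i)))"
    unfolding TSE_def by blast
  then have "e = ((fst (pmap f g p) ! i, i), snd (pmap f g p) ! i, (fst (pmap f g p) ! Suc i, Suc i))"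
    using assms unfolding pmap_def emap_def by simp
  moreover have "pmap f g p \<in> pmap f g ` F" "i < length (snd (pmap f g p))"
    using p unfolding pmap_def by auto
  ultimately show "e \<in> TSE (pmap f g ` F)"
    unfolding TSE_def by blast
qed

lemma SE_ends:
  assumes "\<forall>p\<in>F. length (fst p) = Suc (length (snd p))" "(x, t, y) \<in> SE F"
  shows "x \<in> SV F \<and> y \<in> SV F"
proof -
  obtain p i where p: "p \<in> F" "i < length (snd p)" "x = fst p ! i" "y = fst p ! Suc i"
    using assms(2) unfolding SE_def by blast
  then have "x \<in> set (fst p)" "y \<in> set (fst p)"
    using assms(1) by (simp_all add: nth_mem)
  then show ?thesis
    using p(1) unfolding SV_def by blast
qed

lemma TSE_ends:
  assumes "(x, t, y) \<in> TSE F"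
  shows "x \<in> TSV F \<and> y \<in> TSV F"
proof -
  obtain p i where "p \<in> F" "i < length (snd p)" "x = (fst p ! i, i)" "y = (fst p ! Suc i, Suc i)"
    using assms unfolding TSE_def by blast
  then show ?thesis
    unfolding TSV_def by fastforce
qed

lemma TSV_fst:
  assumes "\<forall>p\<in>F. length (fst p) = Suc (length (snd p))" "(a, i) \<in> TSV F"
  shows "a \<in> SV F"
proof -
  obtain p where p: "p \<in> F" "i \<le> length (snd p)" "a = fst p ! i"
    using assms(2) unfolding TSV_def by blast
  then have "a \<in> set (fst p)"
    using assms(1) by (simp add: nth_mem)
  then show ?thesis
    using p(1) unfolding SV_def by blast
qed

lemma elabels_SE: "elabels (SE F) = flabels F"
proof (intro set_eqI iffI)
  fix t assume "t \<in> elabels (SE F)"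
  then obtain p i where "p \<in> F" "i < length (snd p)" "t = snd p ! i"
    unfolding elabels_def SE_def by blast
  then show "t \<in> flabels F"
    unfolding flabels_def using nth_mem by blast
next
  fix t assume "t \<in> flabels F"
  then obtain p i where "p \<in> F" "i < length (snd p)" "t = snd p ! i"
    unfolding flabels_def by (metis UN_E in_set_conv_nth)
  then have "(fst p ! i, t, fst p ! Suc i) \<in> SE F"
    unfolding SE_def by blast
  then show "t \<in> elabels (SE F)"
    unfolding elabels_def by blast
qed

lemma elabels_TSE: "elabels (TSE F) = flabels F"
proof (intro set_eqI iffI)
  fix t assume "t \<in> elabels (TSE F)"
  then obtain p i where "p \<in> F" "i < length (snd p)" "t = snd p ! i"
    unfolding elabels_def TSE_def by blast
  then show "t \<in> flabels F"
    unfolding flabels_def using nth_mem by blast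
next
  fix t assume "t \<in> flabels F"
  then obtain p i where "p \<in> F" "i < length (snd p)" "t = snd p ! i"
    unfolding flabels_def by (metis UN_E in_set_conv_nth)
  then have "((fst p ! i, i), t, (fst p ! Suc i, Suc i)) \<in> TSE F"
    unfolding TSE_def by blast
  then show "t \<in> elabels (TSE F)"
    unfolding elabels_def by blast
qed

lemma rpath_eq_pmap: "rpath E = pmap (rperm E) (rtr E)"
  unfolding rpath_def pmap_def by (rule ext) simp

locale flip_orbit =
  fixes n h :: nat and u v :: "nat list" and p0 :: bpath and F :: "bpath set"
  assumes p0: "p0 \<in> bpaths n h u v"
    and orbit: "F = {q. (p0, q) \<in> (flipstep n h u v)\<^sup>*}"
begin

definition E :: "nat set" where
  "E = path_letters (snd p0)"

lemma orbit_invariants: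
  assumes "q \<in> F"
  shows "q \<in> bpaths n h u v \<and> path_letters (snd q) = E"
proof -
  have "(p0, q) \<in> (flipstep n h u v)\<^sup>*"
    using assms orbit by blast
  then show ?thesis
  proof (induction rule: rtrancl_induct)
    case base
    then show ?case
      using p0 unfolding E_def by simp
  next
    case (step q r)
    then obtain i where "1 \<le> i" "i < h" "r = flip n i q"
      by (auto elim: flipstepE)
    then show ?case
      using step.IH flip_in_bpaths[of q n h u v i] path_letters_flip[of q n h u v i] by simp
  qed
qed

lemma bpaths_F: "q \<in> F \<Longrightarrow> q \<in> bpaths n h u v"
  using orbit_invariants by blast

lemma path_letters_F: "q \<in> F \<Longrightarrow> path_letters (snd q) = E"
  using orbit_invariants by blast

lemma p0_in_F: "p0 \<in> F"
  using orbit by blast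

lemma flip_in_F:
  assumes "q \<in> F" "1 \<le> i" "i < h"
  shows "flip n i q \<in> F"
  using assms orbit flip_in_flipstep[OF bpaths_F[OF assms(1)] assms(2,3)]
  by (auto intro: rtrancl_into_rtrancl)

lemma bpaths_F_pair: "q \<in> F \<Longrightarrow> (fst q, snd q) \<in> bpaths n h u v"
  using bpaths_F by simp

lemma lengths_F:
  assumes "q \<in> F"
  shows "length (snd q) = h" "length (fst q) = Suc h"
  using bpathsD(1,2)[OF bpaths_F_pair[OF assms]] by simp_all

lemma labels_F:
  assumes "q \<in> F" "t \<in> set (snd q)"
  shows "t \<in> transp_set n" "letters t \<subseteq> E"
proof -
  obtain k where "k < h" "t = snd q ! k"
    using assms(2) lengths_F[OF assms(1)] by (metis in_set_conv_nth)
  then show "t \<in> transp_set n"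
    using bpathsD(6)[OF bpaths_F_pair[OF assms(1)]] unfolding bedge_def by auto
  show "letters t \<subseteq> E"
    using assms path_letters_F unfolding path_letters_def by blast
qed

lemma E_subset: "E \<subseteq> {1..n}"
proof
  fix a assume "a \<in> E"
  then obtain t where "t \<in> set (snd p0)" "a \<in> letters t"
    unfolding E_def path_letters_def by blast
  moreover from this(1) have "t \<in> transp_set n"
    by (rule labels_F(1)[OF p0_in_F])
  ultimately show "a \<in> {1..n}"
    unfolding letters_def transp_set_iff by auto
qed

lemma finite_E: "finite E"
  using E_subset finite_subset by blast

lemma Eset_eq: "Eset F = E"
proof -
  have some: "(SOME p. p \<in> F) \<in> F"
    using p0_in_F by (rule someI)
  then have "moved (SOME p. p \<in> F) = path_letters (snd (SOME p. p \<in> F))"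
    using labels_F(1) by (intro moved_eq_path_letters) blast
  then show ?thesis
    unfolding Eset_def using path_letters_F[OF some] by simp
qed

lemma agrees_off_F:
  assumes "q \<in> F" "x \<in> set (fst q)"
  shows "agrees_off E u x"
proof -
  have "agrees_off E u (fst q ! k)" if "k \<le> h" for k
    using that
  proof (induction k)
    case 0
    have "length (fst q) = Suc h" "hd (fst q) = u"
      using bpathsD(2,3)[OF bpaths_F_pair[OF assms(1)]] by simp_all
    then have "fst q ! 0 = u"
      by (cases "fst q") auto
    then show ?case
      using agrees_off_refl by simp
  next
    case (Suc k)
    then have "fst q ! Suc k = tmul (snd q ! k) (fst q ! k)"
      using bpathsD(6)[OF bpaths_F_pair[OF assms(1)]] unfolding bedge_def by simp
    moreover have "letters (snd q ! k) \<subseteq> E"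
      using labels_F(2)[OF assms(1)] lengths_F[OF assms(1)] Suc.prems by simp
    ultimately show ?case
      using Suc agrees_off_tmul by simp
  qed
  then show ?thesis
    using assms(2) lengths_F[OF assms(1)] by (metis in_set_conv_nth less_Suc_eq_le)
qed

lemma agrees_off_SV: "x \<in> SV F \<Longrightarrow> agrees_off E u x"
  unfolding SV_def using agrees_off_F by blast

lemma inj_on_rperm_SV: "inj_on (rperm E) (SV F)"
  by (rule inj_onI) (use rperm_inj_agrees_off[OF finite_E] agrees_off_SV in blast)

lemma flabelsD:
  assumes "t \<in> flabels F"
  shows "t \<in> transp_set n" "letters t \<subseteq> E"
  using assms labels_F unfolding flabels_def by blast+

lemma inj_on_rtr_flabels: "inj_on (rtr E) (flabels F)"
  by (rule inj_on_subset[OF inj_on_rtr[OF finite_E]]) (use flabelsD(2) in blast)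

lemma rtr_order_iff:
  assumes "s \<in> flabels F" "t \<in> flabels F"
  shows "(rtr E s, rtr E t) \<in> rorder E R \<longleftrightarrow> (s, t) \<in> R"
  by (rule rorder_rtr_iff[OF finite_E flabelsD(1)[OF assms(1)] flabelsD(1)[OF assms(2)]
    flabelsD(2)[OF assms(1)] flabelsD(2)[OF assms(2)]])

lemma rpath_in_bpaths:
  assumes "q \<in> F"
  shows "rpath E q \<in> bpaths (card E) h (rperm E u) (rperm E v)"
proof -
  note D = bpathsD[OF bpaths_F_pair[OF assms]]
  have "fst q \<noteq> []"
    using D(2) by auto
  moreover have "perm_n (card E) (rperm E x)" if "x \<in> set (fst q)" for x
    using perm_n_rperm[OF D(5)[OF that] E_subset] .
  moreover have "bedge (card E) (rperm E (fst q ! k)) (rtr E (snd q ! k)) (rperm E (fst q ! Suc k))"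
    if "k < h" for k
    using bedge_rperm[OF D(6)[OF that] _ E_subset] labels_F(2)[OF assms] nth_mem D(1) that by simp
  ultimately show ?thesis
    using D(1-4) unfolding bpaths_def rpath_def by (simp add: hd_map last_map)
qed

lemma rpath_flip:
  assumes q: "q \<in> F" and i: "1 \<le> i" "i < h"
  shows "rpath E (flip n i q) = flip (card E) i (rpath E q)"
proof -
  obtain xs ts where q_eq: "q = (xs, ts)"
    by (cases q)
  have p: "(xs, ts) \<in> bpaths n h u v"
    using bpaths_F[OF q] q_eq by simp
  note D = bpathsD[OF p]
  obtain y s s' where y: "y \<noteq> xs ! i" "bedge n (xs ! (i - 1)) s y" "bedge n y s' (xs ! Suc i)"
    and flip_q: "flip n i (xs, ts) = (xs[i := y], ts[i - 1 := s, i := s'])"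
    using flipE[OF p i] by blast
  have flipped: "(xs[i := y], ts[i - 1 := s, i := s']) \<in> F"
    using flip_in_F[OF q i] flip_q q_eq by simp
  have idx: "i - 1 < length ts" "i < length ts" "i - 1 \<noteq> i" "i < length xs"
    using D(1,2) i by auto
  have "s' \<in> set (ts[i - 1 := s, i := s'])"
    using idx by (simp add: set_update_memI)
  moreover have "ts[i - 1 := s, i := s'] ! (i - 1) = s"
    using idx by simp
  then have "s \<in> set (ts[i - 1 := s, i := s'])"
    using idx by (metis length_list_update nth_mem)
  ultimately have letters: "letters s \<subseteq> E" "letters s' \<subseteq> E"
    using labels_F(2)[OF flipped] by simp_all
  have "y \<in> set (xs[i := y])"
    using idx by (simp add: set_update_memI)
  then have "agrees_off E u y" "agrees_off E u (xs ! i)"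
    using agrees_off_F[OF flipped] agrees_off_F[OF q] idx q_eq by (simp_all add: nth_mem)
  then have "rperm E y \<noteq> map (rperm E) xs ! i"
    using rperm_inj_agrees_off[OF finite_E] y(1) idx by auto
  moreover have "bedge (card E) (map (rperm E) xs ! (i - 1)) (rtr E s) (rperm E y)"
    using bedge_rperm[OF y(2) letters(1) E_subset] idx by simp
  moreover have "bedge (card E) (rperm E y) (rtr E s') (map (rperm E) xs ! Suc i)"
    using bedge_rperm[OF y(3) letters(2) E_subset] D(2) i by simp
  moreover have "(map (rperm E) xs, map (rtr E) ts) \<in> bpaths (card E) h (rperm E u) (rperm E v)"
    using rpath_in_bpaths[OF q] q_eq unfolding rpath_def by simp
  ultimately have "flip (card E) i (rpath E q) =
      ((map (rperm E) xs)[i := rperm E y], (map (rtr E) ts)[i - 1 := rtr E s, i := rtr E s'])"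
    unfolding q_eq rpath_def fst_conv snd_conv using flip_eq i by blast
  also have "\<dots> = rpath E (flip n i q)"
    unfolding q_eq flip_q rpath_def by (simp add: map_update)
  finally show ?thesis
    by simp
qed

lemma inj_on_rpath: "inj_on (rpath E) F"
  unfolding rpath_eq_pmap using inj_on_pmap inj_on_rperm_SV inj_on_rtr_flabels by blast

lemma rpath_image_eq_orbit:
  "rpath E ` F = {q. (rpath E p0, q) \<in> (flipstep (card E) h (rperm E u) (rperm E v))\<^sup>*}"
proof (intro set_eqI iffI)
  fix q' assume "q' \<in> rpath E ` F"
  then obtain q where q: "q \<in> F" "q' = rpath E q"
    by blast
  have "(p0, q) \<in> (flipstep n h u v)\<^sup>*"
    using q(1) orbit by blast
  then have "(rpath E p0, rpath E q) \<in> (flipstep (card E) h (rperm E u) (rperm E v))\<^sup>*"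
  proof (induction rule: rtrancl_induct)
    case (step r r')
    then obtain i where "1 \<le> i" "i < h" "r' = flip n i r"
      by (auto elim: flipstepE)
    moreover have "r \<in> F"
      using step.hyps(1) orbit by blast
    ultimately have "(rpath E r, rpath E r') \<in> flipstep (card E) h (rperm E u) (rperm E v)"
      using rpath_flip flip_in_flipstep rpath_in_bpaths by simp
    then show ?case
      by (rule rtrancl_into_rtrancl[OF step.IH])
  qed simp
  then show "q' \<in> {q. (rpath E p0, q) \<in> (flipstep (card E) h (rperm E u) (rperm E v))\<^sup>*}"
    using q(2) by simp
next
  fix q' assume "q' \<in> {q. (rpath E p0, q) \<in> (flipstep (card E) h (rperm E u) (rperm E v))\<^sup>*}"
  then have "(rpath E p0, q') \<in> (flipstep (card E) h (rperm E u) (rperm E v))\<^sup>*"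
    by simp
  then show "q' \<in> rpath E ` F"
  proof (induction rule: rtrancl_induct)
    case base
    then show ?case
      using p0_in_F by simp
  next
    case (step r' r'')
    then obtain r where r: "r \<in> F" "r' = rpath E r"
      by blast
    obtain i where "1 \<le> i" "i < h" "r'' = flip (card E) i r'"
      using step.hyps(2) by (auto elim: flipstepE)
    then show ?case
      using r rpath_flip flip_in_F by (metis image_eqI)
  qed
qed

lemma is_flipclass_rpath_image: "is_flipclass (card E) h (rpath E ` F)"
  unfolding is_flipclass_def using rpath_in_bpaths[OF p0_in_F] rpath_image_eq_orbit by blast

lemma length_vertices_F: "\<forall>p\<in>F. length (fst p) = Suc (length (snd p))"
  using lengths_F by simp

lemma label_rpath:
  assumes "p \<in> F" "k < h"
  shows "snd (rpath E p) ! k = rtr E (snd p ! k)"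
  using assms lengths_F unfolding rpath_def by simp

lemma inj_on_rperm_TSV: "inj_on (\<lambda>(a, i). (rperm E a, i)) (TSV F)"
  using inj_on_rperm_SV TSV_fst[OF length_vertices_F] unfolding inj_on_def by fast

lemma lg_iso_S: "lg_iso (SV F) (SE F) (SV (rpath E ` F)) (SE (rpath E ` F)) (rperm E) (rtr E)"
  unfolding rpath_eq_pmap SV_pmap_image SE_pmap_image[OF length_vertices_F]
  by (rule lg_iso_image[OF inj_on_rperm_SV])
    (use inj_on_rtr_flabels elabels_SE SE_ends[OF length_vertices_F] in auto)

lemma lg_iso_TS:
  "lg_iso (TSV F) (TSE F) (TSV (rpath E ` F)) (TSE (rpath E ` F)) (\<lambda>(a, i). (rperm E a, i)) (rtr E)"
  unfolding rpath_eq_pmap TSV_pmap_image[OF length_vertices_F] TSE_pmap_image[OF length_vertices_F]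
  by (rule lg_iso_image[OF inj_on_rperm_TSV]) (use inj_on_rtr_flabels elabels_TSE TSE_ends in auto)

lemma bij_betw_increasing_F:
  "bij_betw (rpath E) {p \<in> F. increasing R (snd p)} {p \<in> rpath E ` F. increasing (rorder E R) (snd p)}"
proof (rule bij_betw_Collect[OF inj_on_imp_bij_betw[OF inj_on_rpath]])
  fix p assume "p \<in> F"
  then have "set (snd p) \<subseteq> flabels F"
    unfolding flabels_def by blast
  then show "increasing (rorder E R) (snd (rpath E p)) \<longleftrightarrow> increasing R (snd p)"
    using increasing_map_iff[OF rtr_order_iff] unfolding rpath_def by simp
qed

lemma bij_betw_increasing_S:
  "bij_betw (pmap (rperm E) (rtr E))
    {p \<in> lpaths (SV F) (SE F). increasing R (snd p)}
    {p \<in> lpaths (SV (rpath E ` F)) (SE (rpath E ` F)). increasing (rorder E R) (snd p)}"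
  unfolding rpath_eq_pmap SV_pmap_image SE_pmap_image[OF length_vertices_F]
  by (rule bij_betw_pmap_increasing_lpaths[OF inj_on_rperm_SV])
    (use inj_on_rtr_flabels elabels_SE SE_ends[OF length_vertices_F] rtr_order_iff in auto)

lemma bij_betw_increasing_TS:
  "bij_betw (pmap (\<lambda>(a, i). (rperm E a, i)) (rtr E))
    {p \<in> lpaths (TSV F) (TSE F). increasing R (snd p)}
    {p \<in> lpaths (TSV (rpath E ` F)) (TSE (rpath E ` F)). increasing (rorder E R) (snd p)}"
  unfolding rpath_eq_pmap TSV_pmap_image[OF length_vertices_F] TSE_pmap_image[OF length_vertices_F]
  by (rule bij_betw_pmap_increasing_lpaths[OF inj_on_rperm_TSV])
    (use inj_on_rtr_flabels elabels_TSE TSE_ends rtr_order_iff in auto)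

lemma flip_iso_rpath: "flip_iso n (card E) h F (rpath E ` F) (rperm E) (rtr E)"
  unfolding flip_iso_def
proof (intro conjI ballI impI)
  show "bij_betw (rperm E) (fverts F) (fverts (rpath E ` F))"
    using lg_iso_S unfolding lg_iso_def fverts_def SV_def by simp
  show "bij_betw (rtr E) (flabels F) (flabels (rpath E ` F))"
    unfolding rpath_eq_pmap flabels_pmap_image using inj_on_rtr_flabels by (rule inj_on_imp_bij_betw)
  show "bij_betw (pmap (rperm E) (rtr E)) F (rpath E ` F)"
    using inj_on_rpath unfolding rpath_eq_pmap by (rule inj_on_imp_bij_betw)
  show "pmap (rperm E) (rtr E) (flip n i p) = flip (card E) i (pmap (rperm E) (rtr E) p)"
    if "p \<in> F" "i \<in> {1..h - 1}" for p i
  proof -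
    have "1 \<le> i" "i < h"
      using that(2) by auto
    then show ?thesis
      using rpath_flip that(1) unfolding rpath_eq_pmap by simp
  qed
  show "tlex (rtr E s) (rtr E t)" if "s \<in> flabels F" "t \<in> flabels F" "tlex s t" for s t
    using tlex_rtr[OF finite_E] flabelsD(2) that by blast
qed

end

theorem lemma6p9:
  fixes n h :: nat and F :: "bpath set"
  assumes "is_flipclass n h F"
  defines "E \<equiv> Eset F"
  defines "m \<equiv> card E"
  defines "F' \<equiv> rpath E ` F"
  shows
    \<comment> \<open>(1)\<close>
    "is_flipclass m h F' \<and>
     bij_betw (rpath E) F F' \<and>
     (\<forall>p\<in>F. \<forall>i\<in>{1..h - 1}. rpath E (flip n i p) = flip m i (rpath E p)) \<and>
     (\<forall>p\<in>F. \<forall>i\<in>{1..h}. rtr E (snd p ! (i - 1)) = snd (rpath E p) ! (i - 1)) \<and>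
    \<comment> \<open>(2)\<close>
     lg_iso (SV F) (SE F) (SV F') (SE F') (rperm E) (rtr E) \<and>
     lg_iso (TSV F) (TSE F) (TSV F') (TSE F') (\<lambda>(a, i). (rperm E a, i)) (rtr E) \<and>
    \<comment> \<open>(3)\<close>
     (\<forall>R. reflection_ordering n R \<longrightarrow>
        bij_betw (rpath E) {p \<in> F. increasing R (snd p)} {p \<in> F'. increasing (rorder E R) (snd p)} \<and>
        bij_betw (pmap (rperm E) (rtr E))
          {p \<in> lpaths (SV F) (SE F). increasing R (snd p)}
          {p \<in> lpaths (SV F') (SE F'). increasing (rorder E R) (snd p)} \<and>
        bij_betw (pmap (\<lambda>(a, i). (rperm E a, i)) (rtr E))
          {p \<in> lpaths (TSV F) (TSE F). increasing R (snd p)}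
          {p \<in> lpaths (TSV F') (TSE F'). increasing (rorder E R) (snd p)}) \<and>
    \<comment> \<open>(4)\<close>
     flip_iso n m h F F' (rperm E) (rtr E)"
proof -
  obtain u v p0 where "p0 \<in> bpaths n h u v" "F = {q. (p0, q) \<in> (flipstep n h u v)\<^sup>*}"
    using assms(1) unfolding is_flipclass_def by blast
  then interpret orbit: flip_orbit n h u v p0 F
    by unfold_locales
  have "E = orbit.E"
    unfolding E_def by (rule orbit.Eset_eq)
  moreover have "\<forall>p\<in>F. \<forall>i\<in>{1..h}. rtr orbit.E (snd p ! (i - 1)) = snd (rpath orbit.E p) ! (i - 1)"
    using orbit.label_rpath by auto
  ultimately show ?thesis
    unfolding m_def F'_def
    using orbit.is_flipclass_rpath_image inj_on_imp_bij_betw[OF orbit.inj_on_rpath] orbit.rpath_flip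
      orbit.lg_iso_S orbit.lg_iso_TS orbit.bij_betw_increasing_F orbit.bij_betw_increasing_S
      orbit.bij_betw_increasing_TS orbit.flip_iso_rpath
    by auto
qed

end
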